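(* Let $\sharp\in\{cy,ra\}$ and assume (ER$\sharp$) and (NE). Then $\sum_{j=1}^M\mathrm{Tr}(\rho^\sharp_+\Phi^\sharp_j)=0$.
   Context: Finite-dimensional $\mathcal H_{\mathcal S},\mathcal H_{\mathcal E_j}$ ($j=1..M$), self-adjoint $H_{\mathcal S},H_{\mathcal E_j}$, self-adjoint $V_j$, $\tau_j>0$, $T=\sum\tau_j$, $U_j=e^{-i\tau_j(H_{\mathcal S}\otimes\mathrm{Id}+\mathrm{Id}\otimes H_{\mathcal E_j}+V_j)}$; $\beta_{\rm ref}>0$; for fixed $\boldsymbol\zeta\in\mathbb R^M$, $\rho_{\mathcal E_j}$ Gibbs state of $H_{\mathcal E_j}$ at $\beta_{\rm ref}-\zeta_j$; $\mathcal L_j(\rho)=\mathrm{Tr}_{\mathcal H_{\mathcal E_j}}(U_j(\rho\otimes\rho_{\mathcal E_j})U_j^* )$ with dual $\mathcal L_j^*$; $\mathcal L_{cy}=\mathcal L_M\circ\cdots\circ\mathcal L_1$, $\mathcal L_{ra}=\frac1M\sum\mathcal L_j$; $\rho^\sharp_+$ unique invariant state of $\mathcal L_\sharp$. Fluxes $\Phi_j=-\frac1T\mathrm{Tr}_{\mathcal H_{\mathcal E_j}}((\mathrm{Id}\otimes\rho_{\mathcal E_j})(U_j^*(\mathrm{Id}\otimes H_{\mathcal E_j})U_j-\mathrm{Id}\otimes H_{\mathcal E_j}))$, $\Phi^{cy}_j=\mathcal L_1^*\circ\cdots\circ\mathcal L_{j-1}^*(\Phi_j)$, $\Phi^{ra}_j=\Phi_j$.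 Primitive: for some $n$ products of $n$ Kraus operators span all operators. (ER$\sharp$): $\mathcal L_{\sharp,\boldsymbol\zeta'}$ primitive for some $\boldsymbol\zeta'$. (NE): there is $\zeta\mapsto\rho_{+,\zeta}$ (states) with $U_j(\rho_{+,\zeta}\otimes\rho_{\mathcal E_j,\zeta})U_j^*=\rho_{+,\zeta}\otimes\rho_{\mathcal E_j,\zeta}$ for all $j$ and $\zeta\in\mathbb R$, $\rho_{\mathcal E_j,\zeta}$ Gibbs at $\beta_{\rm ref}-\zeta$. *)

theory Defs
  imports "Jordan_Normal_Form.Matrix"
begin

text \<open>A Hilbert space of dimension d is identified with C^d; operators are
  complex d x d matrices. The tensor product of C^a and C^b is C^(a*b) with
  basis index (i,k) mapped to i*b+k (Kronecker convention).\<close>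

definition madj :: "complex mat \<Rightarrow> complex mat" where
  "madj A = mat (dim_col A) (dim_row A) (\<lambda>(i,j). cnj (A $$ (j,i)))"

definition mtrace :: "complex mat \<Rightarrow> complex" where
  "mtrace A = (\<Sum>i<dim_row A. A $$ (i,i))"

definition self_adjoint :: "nat \<Rightarrow> complex mat \<Rightarrow> bool" where
  "self_adjoint d A \<longleftrightarrow> A \<in> carrier_mat d d \<and> madj A = A"

definition is_state :: "nat \<Rightarrow> complex mat \<Rightarrow> bool" where
  "is_state d \<rho> \<longleftrightarrow> self_adjoint d \<rho> \<and>
     (\<forall>v \<in> carrier_vec d. 0 \<le> Re (\<Sum>i<d. cnj (v $ i) * ((\<rho> *\<^sub>v v) $ i))) \<and>
     mtrace \<rho> = 1"

definition kron :: "complex mat \<Rightarrow> complex mat \<Rightarrow> complex mat" where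
  "kron A B = mat (dim_row A * dim_row B) (dim_col A * dim_col B)
     (\<lambda>(i,j). A $$ (i div dim_row B, j div dim_col B) * B $$ (i mod dim_row B, j mod dim_col B))"

definition ptrace2 :: "nat \<Rightarrow> nat \<Rightarrow> complex mat \<Rightarrow> complex mat" where
  "ptrace2 dS dE X = mat dS dS (\<lambda>(i,k). \<Sum>b<dE. X $$ (i*dE+b, k*dE+b))"

definition mexp :: "complex mat \<Rightarrow> complex mat" where
  "mexp A = mat (dim_row A) (dim_row A) (\<lambda>(i,j). \<Sum>k. (A ^\<^sub>m k) $$ (i,j) / of_nat (fact k))"

definition gibbs :: "real \<Rightarrow> complex mat \<Rightarrow> complex mat" where
  "gibbs b H = (1 / mtrace (mexp ((- complex_of_real b) \<cdot>\<^sub>m H))) \<cdot>\<^sub>m mexp ((- complex_of_real b) \<cdot>\<^sub>m H)"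

text \<open>Reservoirs are indexed by j in 0..<M (the paper's j = 1..M).\<close>

definition Uop :: "nat \<Rightarrow> (nat \<Rightarrow> nat) \<Rightarrow> complex mat \<Rightarrow> (nat \<Rightarrow> complex mat)
    \<Rightarrow> (nat \<Rightarrow> complex mat) \<Rightarrow> (nat \<Rightarrow> real) \<Rightarrow> nat \<Rightarrow> complex mat" where
  "Uop dS dE HS HE V \<tau> j = mexp ((- \<i> * complex_of_real (\<tau> j)) \<cdot>\<^sub>m
      (kron HS (1\<^sub>m (dE j)) + kron (1\<^sub>m dS) (HE j) + V j))"

definition rhoE :: "(nat \<Rightarrow> complex mat) \<Rightarrow> real \<Rightarrow> (nat \<Rightarrow> real) \<Rightarrow> nat \<Rightarrow> complex mat" where
  "rhoE HE \<beta> \<zeta> j = gibbs (\<beta> - \<zeta> j) (HE j)"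

definition Lj :: "nat \<Rightarrow> (nat \<Rightarrow> nat) \<Rightarrow> complex mat \<Rightarrow> (nat \<Rightarrow> complex mat)
    \<Rightarrow> (nat \<Rightarrow> complex mat) \<Rightarrow> (nat \<Rightarrow> real) \<Rightarrow> real \<Rightarrow> (nat \<Rightarrow> real)
    \<Rightarrow> nat \<Rightarrow> complex mat \<Rightarrow> complex mat" where
  "Lj dS dE HS HE V \<tau> \<beta> \<zeta> j \<rho> =
     (let U = Uop dS dE HS HE V \<tau> j in
      ptrace2 dS (dE j) (U * kron \<rho> (rhoE HE \<beta> \<zeta> j) * madj U))"

text \<open>dual (Heisenberg picture) of Lj w.r.t. the pairing (rho, X) -> Tr(rho X)\<close>
definition Ljdual :: "nat \<Rightarrow> (nat \<Rightarrow> nat) \<Rightarrow> complex mat \<Rightarrow> (nat \<Rightarrow> complex mat)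
    \<Rightarrow> (nat \<Rightarrow> complex mat) \<Rightarrow> (nat \<Rightarrow> real) \<Rightarrow> real \<Rightarrow> (nat \<Rightarrow> real)
    \<Rightarrow> nat \<Rightarrow> complex mat \<Rightarrow> complex mat" where
  "Ljdual dS dE HS HE V \<tau> \<beta> \<zeta> j X =
     (let U = Uop dS dE HS HE V \<tau> j in
      ptrace2 dS (dE j) (kron (1\<^sub>m dS) (rhoE HE \<beta> \<zeta> j) * (madj U * kron X (1\<^sub>m (dE j)) * U)))"

datatype scheme = Cy | Ra

definition Lsharp :: "scheme \<Rightarrow> nat \<Rightarrow> nat \<Rightarrow> (nat \<Rightarrow> nat) \<Rightarrow> complex mat \<Rightarrow> (nat \<Rightarrow> complex mat)
    \<Rightarrow> (nat \<Rightarrow> complex mat) \<Rightarrow> (nat \<Rightarrow> real) \<Rightarrow> real \<Rightarrow> (nat \<Rightarrow> real)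
    \<Rightarrow> complex mat \<Rightarrow> complex mat" where
  "Lsharp s M dS dE HS HE V \<tau> \<beta> \<zeta> \<rho> =
     (case s of
        Cy \<Rightarrow> fold (\<lambda>j r. Lj dS dE HS HE V \<tau> \<beta> \<zeta> j r) [0..<M] \<rho>
      | Ra \<Rightarrow> (1 / of_nat M) \<cdot>\<^sub>m
               foldr (\<lambda>j A. Lj dS dE HS HE V \<tau> \<beta> \<zeta> j \<rho> + A) [0..<M] (0\<^sub>m dS dS))"

definition Phi :: "nat \<Rightarrow> nat \<Rightarrow> (nat \<Rightarrow> nat) \<Rightarrow> complex mat \<Rightarrow> (nat \<Rightarrow> complex mat)
    \<Rightarrow> (nat \<Rightarrow> complex mat) \<Rightarrow> (nat \<Rightarrow> real) \<Rightarrow> real \<Rightarrow> (nat \<Rightarrow> real)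
    \<Rightarrow> nat \<Rightarrow> complex mat" where
  "Phi M dS dE HS HE V \<tau> \<beta> \<zeta> j =
     (let U = Uop dS dE HS HE V \<tau> j; T = (\<Sum>k<M. \<tau> k);
          HEt = kron (1\<^sub>m dS) (HE j) in
      (- 1 / complex_of_real T) \<cdot>\<^sub>m
        ptrace2 dS (dE j) (kron (1\<^sub>m dS) (rhoE HE \<beta> \<zeta> j) * (madj U * HEt * U - HEt)))"

definition Phisharp :: "scheme \<Rightarrow> nat \<Rightarrow> nat \<Rightarrow> (nat \<Rightarrow> nat) \<Rightarrow> complex mat \<Rightarrow> (nat \<Rightarrow> complex mat)
    \<Rightarrow> (nat \<Rightarrow> complex mat) \<Rightarrow> (nat \<Rightarrow> real) \<Rightarrow> real \<Rightarrow> (nat \<Rightarrow> real)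
    \<Rightarrow> nat \<Rightarrow> complex mat" where
  "Phisharp s M dS dE HS HE V \<tau> \<beta> \<zeta> j =
     (case s of
        Cy \<Rightarrow> foldr (\<lambda>k X. Ljdual dS dE HS HE V \<tau> \<beta> \<zeta> k X) [0..<j] (Phi M dS dE HS HE V \<tau> \<beta> \<zeta> j)
      | Ra \<Rightarrow> Phi M dS dE HS HE V \<tau> \<beta> \<zeta> j)"

definition in_span :: "nat \<Rightarrow> complex mat set \<Rightarrow> complex mat \<Rightarrow> bool" where
  "in_span d S X \<longleftrightarrow> (\<exists>cs :: (complex \<times> complex mat) list.
      set (map snd cs) \<subseteq> S \<and> X = foldr (\<lambda>(c,A) B. c \<cdot>\<^sub>m A + B) cs (0\<^sub>m d d))"

definition kraus_rep :: "nat \<Rightarrow> (complex mat \<Rightarrow> complex mat) \<Rightarrow> complex mat list \<Rightarrow> bool" where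
  "kraus_rep d L Ks \<longleftrightarrow> set Ks \<subseteq> carrier_mat d d \<and>
     (\<forall>\<rho> \<in> carrier_mat d d. L \<rho> = foldr (\<lambda>K B. K * \<rho> * madj K + B) Ks (0\<^sub>m d d))"

text \<open>primitive: for some n, products of n Kraus operators span all operators
  (this property does not depend on the chosen Kraus representation)\<close>
definition primitive :: "nat \<Rightarrow> (complex mat \<Rightarrow> complex mat) \<Rightarrow> bool" where
  "primitive d L \<longleftrightarrow> (\<exists>Ks. kraus_rep d L Ks \<and> (\<exists>n.
     \<forall>X \<in> carrier_mat d d. in_span d {foldr (\<lambda>A B. A * B) ws (1\<^sub>m d) | ws. length ws = n \<and> set ws \<subseteq> set Ks} X))"

end

theory Submission
  imports Defs "Jordan_Normal_Form.Schur_Decomposition" "HOL-Computational_Algebra.Fundamental_Theorem_Algebra"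
begin

text \<open>By (NE) at zeta = 0 there is a state B with U_j (B \<otimes> gibbs beta H_E_j) U_j* = B \<otimes> gibbs beta H_E_j
  for all j. Primitivity forces B to be faithful: otherwise all Kraus operators, and hence all
  matrices, would leave ker B invariant. So K = - log B / beta exists, and every U_j commutes with
  K \<otimes> 1 + 1 \<otimes> H_E_j, a function of B \<otimes> gibbs beta H_E_j. By this conservation law each flux is
  a coboundary, Phi_j = - (K - L_j*(K)) / T. At a state rho invariant under the cyclic scheme the
  fluxes Phi_j^cy telescope to - (Tr (rho K) - Tr (L_cy(rho) K)) / T = 0; for the random scheme
  their sum is - M (Tr (rho K) - Tr (L_ra(rho) K)) / T = 0.\<close>

section \<open>Adjoints, unitary and diagonal matrices\<close>

declare index_mult_mat(1)[simp del]

lemma index_mult_mat_sum[simp]: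
  assumes "i < dim_row A" "j < dim_col B" "dim_col A = dim_row B"
  shows "(A * B) $$ (i,j) = (\<Sum>k<dim_col A. A $$ (i,k) * B $$ (k,j))"
  using assms by (simp add: index_mult_mat(1) scalar_prod_def atLeast0LessThan)

lemma mult_carrier_sq[simp]: "A \<in> carrier_mat n n \<Longrightarrow> B \<in> carrier_mat n n \<Longrightarrow> A * B \<in> carrier_mat n n"
  by (rule mult_carrier_mat)

lemma madj_dims[simp]: "dim_row (madj A) = dim_col A" "dim_col (madj A) = dim_row A"
  by (auto simp: madj_def)

lemma madj_index[simp]: "i < dim_col A \<Longrightarrow> j < dim_row A \<Longrightarrow> madj A $$ (i,j) = cnj (A $$ (j,i))"
  by (auto simp: madj_def)

lemma madj_carrier[simp]: "A \<in> carrier_mat n m \<Longrightarrow> madj A \<in> carrier_mat m n"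
  unfolding carrier_mat_def by simp

lemma madj_madj[simp]: "madj (madj A) = A"
  by (rule eq_matI) (auto simp: madj_def)

lemma madj_one[simp]: "madj (1\<^sub>m n) = 1\<^sub>m n"
  by (intro eq_matI) auto

lemma madj_mult:
  assumes "A \<in> carrier_mat n k" "B \<in> carrier_mat k m"
  shows "madj (A * B) = madj B * madj A"
  using assms by (intro eq_matI) (auto simp: mult.commute)

lemma madj_add:
  assumes "A \<in> carrier_mat n m" "B \<in> carrier_mat n m"
  shows "madj (A + B) = madj A + madj B"
  using assms by (intro eq_matI) auto

lemma mult_left_inverse_cancel:
  fixes A :: "complex mat"
  assumes "A \<in> carrier_mat n m" "B \<in> carrier_mat m n" "C \<in> carrier_mat n k" "A * B = 1\<^sub>m n"
  shows "A * (B * C) = C"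
  using assms by (simp add: assoc_mult_mat[symmetric, of A n m B n C k])

definition unitary :: "nat \<Rightarrow> complex mat \<Rightarrow> bool" where
  "unitary n U \<longleftrightarrow> U \<in> carrier_mat n n \<and> madj U * U = 1\<^sub>m n \<and> U * madj U = 1\<^sub>m n"

lemma unitaryD:
  assumes "unitary n V"
  shows "V \<in> carrier_mat n n" "madj V \<in> carrier_mat n n" "madj V * V = 1\<^sub>m n" "V * madj V = 1\<^sub>m n"
  using assms unfolding unitary_def by auto

lemma unitaryI:
  assumes "U \<in> carrier_mat n n" "madj U * U = 1\<^sub>m n"
  shows "unitary n U"
  using assms mat_mult_left_right_inverse[OF madj_carrier[OF assms(1)] assms(1) assms(2)]
  unfolding unitary_def by blast

lemma unitary_mult:
  assumes "unitary n U" "unitary n V"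
  shows "unitary n (U * V)"
proof (rule unitaryI)
  note u = unitaryD[OF assms(1)] and v = unitaryD[OF assms(2)]
  show "U * V \<in> carrier_mat n n" using u v by simp
  have "madj (U * V) * (U * V) = madj V * (madj U * (U * V))"
    using u v by (simp add: madj_mult[of _ n n _ n] assoc_mult_mat[of "madj V" n n "madj U" n "U * V" n])
  also have "madj U * (U * V) = V" using u v by (intro mult_left_inverse_cancel[of _ n n]) auto
  finally show "madj (U * V) * (U * V) = 1\<^sub>m n" using v by simp
qed

definition diag_matrix :: "nat \<Rightarrow> (nat \<Rightarrow> complex) \<Rightarrow> complex mat" where
  "diag_matrix n d = mat n n (\<lambda>(i,j). if i = j then d i else 0)"

lemma diag_matrix_carrier[simp]: "diag_matrix n d \<in> carrier_mat n n"
  and diag_matrix_dims[simp]: "dim_row (diag_matrix n d) = n" "dim_col (diag_matrix n d) = n"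
  by (auto simp: diag_matrix_def)

lemma diag_matrix_index[simp]: "i < n \<Longrightarrow> j < n \<Longrightarrow> diag_matrix n d $$ (i,j) = (if i = j then d i else 0)"
  by (auto simp: diag_matrix_def)

lemma index_mult_diag_matrix:
  "A \<in> carrier_mat n n \<Longrightarrow> p < n \<Longrightarrow> q < n \<Longrightarrow> (A * diag_matrix n d) $$ (p,q) = A $$ (p,q) * d q"
  by (simp add: if_distrib[where f="\<lambda>x. _ * x"] sum.delta' cong: if_cong)

lemma index_diag_matrix_mult:
  "A \<in> carrier_mat n n \<Longrightarrow> p < n \<Longrightarrow> q < n \<Longrightarrow> (diag_matrix n d * A) $$ (p,q) = d p * A $$ (p,q)"
  by (simp add: if_distrib[where f="\<lambda>x. x * _"] sum.delta cong: if_cong)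

lemma conj_diag_index:
  assumes U: "U \<in> carrier_mat n n" and V: "V \<in> carrier_mat n n" and i: "i < n" and j: "j < n"
  shows "(U * diag_matrix n d * madj V) $$ (i,j) = (\<Sum>k<n. U $$ (i,k) * d k * cnj (V $$ (j,k)))"
proof -
  have "(U * diag_matrix n d) $$ (i,k) = U $$ (i,k) * d k" if "k < n" for k
    by (rule index_mult_diag_matrix[OF U i that])
  then show ?thesis using U V i j by simp
qed

section \<open>The spectral theorem for self-adjoint matrices\<close>

lemma cscalar_self: "v \<bullet>c v = complex_of_real (\<Sum>k<dim_vec v. (cmod (v $ k))\<^sup>2)"
proof -
  have "v \<bullet>c v = (\<Sum>k<dim_vec v. v $ k * cnj (v $ k))"
    by (simp add: scalar_prod_def atLeast0LessThan)
  also have "\<dots> = (\<Sum>k<dim_vec v. complex_of_real ((cmod (v $ k))\<^sup>2))"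
    by (simp only: complex_norm_square)
  finally show ?thesis by (simp only: of_real_sum)
qed

lemma sum_cmod_square_pos:
  assumes "v \<in> carrier_vec n" "v \<noteq> 0\<^sub>v n"
  shows "(\<Sum>k<n. (cmod (v $ k))\<^sup>2) > 0"
proof -
  obtain k where k: "k < n" "v $ k \<noteq> 0"
    using assms by (metis eq_vecI carrier_vecD index_zero_vec(1,2))
  have "(cmod (v $ k))\<^sup>2 \<le> (\<Sum>k<n. (cmod (v $ k))\<^sup>2)"
    using k by (intro member_le_sum) auto
  moreover have "(cmod (v $ k))\<^sup>2 > 0" using k by simp
  ultimately show ?thesis by linarith
qed

lemma unit_eigenvector_exists:
  fixes A :: "complex mat"
  assumes A: "A \<in> carrier_mat n n" and n: "n > 0"
  obtains e u where "u \<in> carrier_vec n" "u \<bullet>c u = 1" "A *\<^sub>v u = e \<cdot>\<^sub>v u"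
proof -
  have "degree (char_poly A) = n" using degree_monic_char_poly[OF A] by simp
  then have "\<not> constant (poly (char_poly A))" using n by (simp add: constant_degree)
  then obtain e where "poly (char_poly A) e = 0" using fundamental_theorem_of_algebra by blast
  then have "eigenvalue A e" using eigenvalue_root_char_poly[OF A] by simp
  then have "eigenvector A (find_eigenvector A e) e" by (rule find_eigenvector[OF A])
  then obtain v where v: "v \<in> carrier_vec n" "v \<noteq> 0\<^sub>v n" "A *\<^sub>v v = e \<cdot>\<^sub>v v"
    using A unfolding eigenvector_def by auto
  define c where "c = (\<Sum>k<n. (cmod (v $ k))\<^sup>2)"
  have c: "c > 0" unfolding c_def by (rule sum_cmod_square_pos[OF v(1,2)])
  define u where "u = complex_of_real (1 / sqrt c) \<cdot>\<^sub>v v"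
  have u: "u \<in> carrier_vec n" using v unfolding u_def by simp
  have "A *\<^sub>v u = e \<cdot>\<^sub>v u"
    unfolding u_def using A v by (simp add: mult_mat_vec smult_smult_assoc mult.commute)
  moreover have "u \<bullet>c u = 1"
  proof -
    have "(\<Sum>k<n. (cmod (u $ k))\<^sup>2) = (\<Sum>k<n. (cmod (v $ k))\<^sup>2 / c)"
      using v c unfolding u_def
      by (intro sum.cong) (auto simp: norm_mult norm_divide power_mult_distrib power_divide)
    also have "\<dots> = 1" using c by (simp add: sum_divide_distrib[symmetric] c_def[symmetric])
    finally show ?thesis using u by (simp add: cscalar_self)
  qed
  ultimately show ?thesis using that u by blast
qed

lemma unitary_of_corthogonal:
  assumes ws: "length ws = n" "set ws \<subseteq> carrier_vec n" "corthogonal ws"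
  defines "W \<equiv> mat n n (\<lambda>(k,j). complex_of_real (1 / sqrt (\<Sum>l<n. (cmod (ws ! j $ l))\<^sup>2)) * ws ! j $ k)"
  shows "unitary n W"
proof (rule unitaryI)
  show W: "W \<in> carrier_mat n n" unfolding W_def by simp
  define S where "S j = (\<Sum>l<n. (cmod (ws ! j $ l))\<^sup>2)" for j
  define nr where "nr j = 1 / sqrt (S j)" for j
  have W_nr: "W = mat n n (\<lambda>(k,j). complex_of_real (nr j) * ws ! j $ k)"
    unfolding W_def nr_def S_def ..
  have wsc: "ws ! j \<in> carrier_vec n" if "j < n" for j using ws that by auto
  have self: "ws ! j \<bullet>c ws ! j = complex_of_real (S j)" if "j < n" for j
    using cscalar_self[of "ws ! j"] wsc[OF that] unfolding S_def by simp
  have S: "S j > 0" if "j < n" for j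
  proof -
    have "S j \<noteq> 0" using self[OF that] ws that corthogonalD[OF ws(3), of j j] by auto
    moreover have "S j \<ge> 0" unfolding S_def by (simp add: sum_nonneg)
    ultimately show ?thesis by simp
  qed
  show "madj W * W = 1\<^sub>m n"
  proof (rule eq_matI)
    fix i j assume "i < dim_row (1\<^sub>m n)" "j < dim_col (1\<^sub>m n)"
    then have i: "i < n" and j: "j < n" by auto
    have "(madj W * W) $$ (i,j)
        = complex_of_real (nr i * nr j) * (ws ! j \<bullet>c ws ! i)"
      using W i j wsc[OF i] wsc[OF j] unfolding W_nr
      by (simp add: scalar_prod_def atLeast0LessThan sum_distrib_left mult_ac)
    also have "\<dots> = 1\<^sub>m n $$ (i,j)"
    proof (cases "i = j")
      case True
      have "nr i * nr i * S i = 1" using S[OF i] unfolding nr_def by (simp add: field_simps)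
      then show ?thesis using True self[OF i] i by (metis index_one_mat(1) of_real_1 of_real_mult)
    next
      case False
      then show ?thesis using corthogonalD[OF ws(3), of j i] ws i j by simp
    qed
    finally show "(madj W * W) $$ (i,j) = 1\<^sub>m n $$ (i,j)" .
  qed (use W in auto)
qed

lemma unitary_with_first_column:
  assumes u: "u \<in> carrier_vec n" and uu: "u \<bullet>c u = 1"
  obtains W where "unitary n W" "\<And>k. k < n \<Longrightarrow> W $$ (k,0) = u $ k"
proof -
  have u0: "u \<noteq> 0\<^sub>v n" using uu u by auto
  then have n: "n > 0" using u by (metis carrier_vecD eq_vecI gr0I index_zero_vec(2) less_nat_zero_code)
  interpret cof_vec_space n "TYPE(complex)" .
  define bs where "bs = basis_completion u"
  note bc = basis_completion[OF u u0, folded bs_def]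
  define ws where "ws = gram_schmidt n bs"
  note gs = gram_schmidt_result[OF bc(2) bc(4) bc(5) ws_def]
  have lws: "length ws = n" using gs bc by simp
  obtain bs' where "bs = u # bs'" unfolding bs_def basis_completion_def Let_def by simp
  then have ws0: "ws ! 0 = u"
    unfolding ws_def using gram_schmidt_hd[OF u, of bs'] lws n by (metis hd_conv_nth list.size(3) not_less0 ws_def)
  have "complex_of_real (\<Sum>l<n. (cmod (u $ l))\<^sup>2) = 1" using uu u cscalar_self[of u] by simp
  then have "(\<Sum>l<n. (cmod (u $ l))\<^sup>2) = 1" by (simp only: of_real_eq_1_iff)
  then show ?thesis
    using that unitary_of_corthogonal[OF lws gs(3) gs(2)] ws0 n by simp
qed

lemma self_adjoint_unitary_conj:
  assumes "self_adjoint n A" "unitary n W"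
  shows "self_adjoint n (madj W * A * W)"
  using assms unfolding self_adjoint_def unitary_def
  by (simp add: madj_mult[of _ n n _ n] assoc_mult_mat[of _ n n _ n _ n])

lemma unitary_conj_first_column:
  assumes A: "A \<in> carrier_mat n n" and W: "unitary n W" and i: "i < n"
    and u: "u \<in> carrier_vec n" "A *\<^sub>v u = e \<cdot>\<^sub>v u" and col: "\<And>k. k < n \<Longrightarrow> W $$ (k,0) = u $ k"
  shows "(madj W * A * W) $$ (i,0) = (if i = 0 then e else 0)"
proof -
  note w = unitaryD[OF W]
  have AW: "(A * W) $$ (k,0) = e * W $$ (k,0)" if k: "k < n" for k
  proof -
    have "(A * W) $$ (k,0) = (\<Sum>l<n. A $$ (k,l) * u $ l)" using A w k col by simp
    also have "\<dots> = (A *\<^sub>v u) $ k" using A u(1) k by (simp add: scalar_prod_def atLeast0LessThan)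
    finally show ?thesis using u k col by simp
  qed
  have "(madj W * A * W) $$ (i,0) = (\<Sum>k<n. cnj (W $$ (k,i)) * (A * W) $$ (k,0))"
    using A w i by (simp add: assoc_mult_mat[of _ n n _ n _ n])
  also have "\<dots> = e * (\<Sum>k<n. cnj (W $$ (k,i)) * W $$ (k,0))"
    using AW by (simp add: sum_distrib_left mult_ac)
  also have "(\<Sum>k<n. cnj (W $$ (k,i)) * W $$ (k,0)) = (madj W * W) $$ (i,0)"
    using w(1) i by simp
  finally show ?thesis using w(3) i by (simp del: index_mult_mat_sum)
qed

definition direct_sum_one :: "nat \<Rightarrow> complex mat \<Rightarrow> complex mat" where
  "direct_sum_one m U = mat (Suc m) (Suc m)
     (\<lambda>(i,j). if i = 0 \<and> j = 0 then 1 else if i = 0 \<or> j = 0 then 0 else U $$ (i - 1, j - 1))"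

lemma unitary_direct_sum_one:
  assumes U: "unitary m U"
  shows "unitary (Suc m) (direct_sum_one m U)"
proof (rule unitaryI)
  let ?U = "direct_sum_one m U"
  show U': "?U \<in> carrier_mat (Suc m) (Suc m)" unfolding direct_sum_one_def by simp
  note u = unitaryD[OF U]
  have orth: "(\<Sum>k<m. cnj (U $$ (k,i)) * U $$ (k,j)) = (if i = j then 1 else 0)"
    if "i < m" "j < m" for i j
    using u that index_mult_mat_sum[of i "madj U" j U] by simp
  show "madj ?U * ?U = 1\<^sub>m (Suc m)"
  proof (rule eq_matI)
    fix i j assume "i < dim_row (1\<^sub>m (Suc m))" "j < dim_col (1\<^sub>m (Suc m))"
    then have i: "i < Suc m" and j: "j < Suc m" by auto
    have "(madj ?U * ?U) $$ (i,j) = cnj (?U $$ (0,i)) * ?U $$ (0,j)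
        + (\<Sum>k<m. cnj (?U $$ (Suc k,i)) * ?U $$ (Suc k,j))"
      using U' i j by (simp add: sum.lessThan_Suc_shift del: sum.lessThan_Suc)
    also have "\<dots> = 1\<^sub>m (Suc m) $$ (i,j)"
      using i j orth[of "i - 1" "j - 1"] unfolding direct_sum_one_def
      by (cases i; cases j) auto
    finally show "(madj ?U * ?U) $$ (i,j) = 1\<^sub>m (Suc m) $$ (i,j)" .
  qed (use U' in auto)
qed

lemma direct_sum_one_diagonalises:
  assumes A: "A \<in> carrier_mat (Suc m) (Suc m)" and U: "U \<in> carrier_mat m m"
    and col: "\<And>i. i < Suc m \<Longrightarrow> A $$ (i,0) = (if i = 0 then complex_of_real r else 0)"
    and row: "\<And>j. j < Suc m \<Longrightarrow> A $$ (0,j) = (if j = 0 then complex_of_real r else 0)"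
    and block: "mat m m (\<lambda>(i,j). A $$ (Suc i, Suc j)) = U * diag_matrix m (\<lambda>i. complex_of_real (l i)) * madj U"
  shows "A = direct_sum_one m U * diag_matrix (Suc m) (\<lambda>i. complex_of_real (if i = 0 then r else l (i - 1)))
           * madj (direct_sum_one m U)"
    (is "A = ?U * ?D * madj ?U")
proof (rule eq_matI)
  have U': "?U \<in> carrier_mat (Suc m) (Suc m)" unfolding direct_sum_one_def by simp
  fix i j assume "i < dim_row (?U * ?D * madj ?U)" "j < dim_col (?U * ?D * madj ?U)"
  then have i: "i < Suc m" and j: "j < Suc m" using U' by auto
  have lower: "A $$ (Suc i', Suc j') = (\<Sum>k<m. U $$ (i',k) * complex_of_real (l k) * cnj (U $$ (j',k)))"
    if "i' < m" "j' < m" for i' j'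
    using arg_cong[OF block, of "\<lambda>X. X $$ (i',j')"] conj_diag_index[OF U U that] that by simp
  have "(?U * ?D * madj ?U) $$ (i,j) = ?U $$ (i,0) * complex_of_real r * cnj (?U $$ (j,0))
      + (\<Sum>k<m. ?U $$ (i,Suc k) * complex_of_real (l k) * cnj (?U $$ (j,Suc k)))"
    using conj_diag_index[OF U' U' i j] by (simp add: sum.lessThan_Suc_shift del: sum.lessThan_Suc)
  also have "\<dots> = A $$ (i,j)"
    using i j col row lower[of "i - 1" "j - 1"] unfolding direct_sum_one_def
    by (cases i; cases j) auto
  finally show "A $$ (i,j) = (?U * ?D * madj ?U) $$ (i,j)" ..
qed (use A in \<open>auto simp: direct_sum_one_def\<close>)

lemma self_adjoint_deflation:
  assumes sa: "self_adjoint (Suc m) A"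
    and col: "\<And>i. i < Suc m \<Longrightarrow> A $$ (i,0) = (if i = 0 then e else 0)"
    and block_diag: "\<And>B. self_adjoint m B \<Longrightarrow>
      \<exists>U l. unitary m U \<and> B = U * diag_matrix m (\<lambda>i. complex_of_real (l i)) * madj U"
  shows "\<exists>U l. unitary (Suc m) U \<and> A = U * diag_matrix (Suc m) (\<lambda>i. complex_of_real (l i)) * madj U"
proof -
  have A: "A \<in> carrier_mat (Suc m) (Suc m)" using sa unfolding self_adjoint_def by simp
  have sym: "A $$ (j,i) = cnj (A $$ (i,j))" if "i < Suc m" "j < Suc m" for i j
    using sa that madj_index[of j A i] unfolding self_adjoint_def by auto
  have e: "e = complex_of_real (Re e)"
    using sym[of 0 0] col[of 0] by (simp add: complex_eq_iff)
  have row: "A $$ (0,j) = (if j = 0 then e else 0)" if "j < Suc m" for j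
    using sym[OF that, of 0] col[OF that] e by (metis complex_cnj_complex_of_real complex_cnj_zero zero_less_Suc)
  have "self_adjoint m (mat m m (\<lambda>(i,j). A $$ (Suc i, Suc j)))"
    unfolding self_adjoint_def by (auto intro!: eq_matI simp: sym[symmetric])
  then obtain U l where U: "unitary m U"
    and block: "mat m m (\<lambda>(i,j). A $$ (Suc i, Suc j)) = U * diag_matrix m (\<lambda>i. complex_of_real (l i)) * madj U"
    using block_diag by blast
  define l' where "l' i = (if i = 0 then Re e else l (i - 1))" for i
  have "A = direct_sum_one m U * diag_matrix (Suc m) (\<lambda>i. complex_of_real (l' i)) * madj (direct_sum_one m U)"
    unfolding l'_def by (rule direct_sum_one_diagonalises[OF A unitaryD(1)[OF U]]) (use col row e block in auto)
  then show ?thesis using unitary_direct_sum_one[OF U] by blast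
qed

theorem self_adjoint_spectral:
  assumes "self_adjoint n A"
  shows "\<exists>U l. unitary n U \<and> A = U * diag_matrix n (\<lambda>i. complex_of_real (l i)) * madj U"
  using assms
proof (induction n arbitrary: A)
  case 0
  then show ?case
    by (intro exI[of _ "1\<^sub>m 0"] exI[of _ "\<lambda>_. 0"]) (auto simp: self_adjoint_def unitary_def intro!: eq_matI)
next
  case (Suc m)
  have A: "A \<in> carrier_mat (Suc m) (Suc m)" using Suc.prems by (simp add: self_adjoint_def)
  obtain e u where u: "u \<in> carrier_vec (Suc m)" "u \<bullet>c u = 1" "A *\<^sub>v u = e \<cdot>\<^sub>v u"
    using unit_eigenvector_exists[OF A] by blast
  obtain W where W: "unitary (Suc m) W" and Wu: "\<And>k. k < Suc m \<Longrightarrow> W $$ (k,0) = u $ k"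
    using unitary_with_first_column[OF u(1,2)] by blast
  note w = unitaryD[OF W]
  have "\<exists>U l. unitary (Suc m) U \<and> madj W * A * W = U * diag_matrix (Suc m) (\<lambda>i. complex_of_real (l i)) * madj U"
    by (rule self_adjoint_deflation[OF self_adjoint_unitary_conj[OF Suc.prems W]
          unitary_conj_first_column[OF A W _ u(1,3) Wu] Suc.IH])
  then obtain U l where U: "unitary (Suc m) U"
    and conj: "madj W * A * W = U * diag_matrix (Suc m) (\<lambda>i. complex_of_real (l i)) * madj U" by blast
  note u' = unitaryD[OF U]
  have "A = W * (madj W * A * W) * madj W"
    using A w mult_left_inverse_cancel[OF w(1) w(2) A w(4)]
    by (simp add: assoc_mult_mat[of _ "Suc m" "Suc m" _ "Suc m" _ "Suc m"])
  also have "\<dots> = (W * U) * diag_matrix (Suc m) (\<lambda>i. complex_of_real (l i)) * madj (W * U)"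
    unfolding conj using w u' by (simp add: madj_mult[of _ "Suc m" "Suc m" _ "Suc m"]
        assoc_mult_mat[of _ "Suc m" "Suc m" _ "Suc m" _ "Suc m"])
  finally show ?case using unitary_mult[OF W U] by blast
qed

section \<open>Functions of unitarily diagonalised matrices\<close>

lemma diag_matrix_mult: "diag_matrix n a * diag_matrix n b = diag_matrix n (\<lambda>i. a i * b i)"
proof (rule eq_matI)
  fix i j assume "i < dim_row (diag_matrix n (\<lambda>i. a i * b i))" "j < dim_col (diag_matrix n (\<lambda>i. a i * b i))"
  then have i: "i < n" and j: "j < n" by auto
  have "(diag_matrix n a * diag_matrix n b) $$ (i,j) = (\<Sum>k<n. (if i = k then a i else 0) * (if k = j then b k else 0))"
    using i j by simp
  also have "\<dots> = (\<Sum>k<n. if k = i then (if i = j then a i * b i else 0) else 0)"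
    by (intro sum.cong) auto
  also have "\<dots> = diag_matrix n (\<lambda>i. a i * b i) $$ (i,j)" using i j by simp
  finally show "(diag_matrix n a * diag_matrix n b) $$ (i,j) = diag_matrix n (\<lambda>i. a i * b i) $$ (i,j)" .
qed auto

lemma diag_matrix_one: "diag_matrix n (\<lambda>_. 1) = 1\<^sub>m n"
  by (intro eq_matI) auto

lemma smult_diag_matrix: "c \<cdot>\<^sub>m diag_matrix n a = diag_matrix n (\<lambda>i. c * a i)"
  by (intro eq_matI) auto

lemma madj_diag_matrix: "madj (diag_matrix n a) = diag_matrix n (\<lambda>i. cnj (a i))"
  by (intro eq_matI) auto

lemma conj_diag_carrier[simp]: "V \<in> carrier_mat n n \<Longrightarrow> V * diag_matrix n a * madj V \<in> carrier_mat n n"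
proof -
  assume V: "V \<in> carrier_mat n n"
  then have "madj V \<in> carrier_mat n n" by simp
  then show ?thesis using V by (metis diag_matrix_carrier mult_carrier_mat)
qed

lemma conj_diag_mult:
  assumes "unitary n V"
  shows "(V * diag_matrix n a * madj V) * (V * diag_matrix n b * madj V)
       = V * diag_matrix n (\<lambda>i. a i * b i) * madj V"
proof -
  note u = unitaryD[OF assms]
  have "madj V * (V * (diag_matrix n b * madj V)) = diag_matrix n b * madj V"
    using u by (intro mult_left_inverse_cancel[of _ n n]) auto
  then show ?thesis
    using u by (simp add: assoc_mult_mat[of _ n n _ n _ n] diag_matrix_mult[symmetric])
qed

lemma conj_diag_madj:
  assumes "V \<in> carrier_mat n n"
  shows "madj (V * diag_matrix n a * madj V) = V * diag_matrix n (\<lambda>i. cnj (a i)) * madj V"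
proof -
  have "madj V \<in> carrier_mat n n" "V * diag_matrix n a \<in> carrier_mat n n" using assms by (auto intro: mult_carrier_mat)
  then show ?thesis using assms
    by (simp add: madj_mult[of _ n n _ n] madj_diag_matrix assoc_mult_mat[of _ n n _ n _ n])
qed

lemma conj_diag_smult:
  assumes "V \<in> carrier_mat n n"
  shows "c \<cdot>\<^sub>m (V * diag_matrix n a * madj V) = V * diag_matrix n (\<lambda>i. c * a i) * madj V"
proof -
  have "madj V \<in> carrier_mat n n" using assms by simp
  then show ?thesis using assms
    by (simp add: mult_smult_distrib[of _ n n _ n] mult_smult_assoc_mat[of _ n n _ n] smult_diag_matrix[symmetric])
qed

lemma conj_diag_add:
  assumes "V \<in> carrier_mat n n"
  shows "V * diag_matrix n a * madj V + V * diag_matrix n b * madj V = V * diag_matrix n (\<lambda>i. a i + b i) * madj V"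
proof -
  have "diag_matrix n a + diag_matrix n b = diag_matrix n (\<lambda>i. a i + b i)" by (intro eq_matI) auto
  moreover have "V * diag_matrix n a * madj V + V * diag_matrix n b * madj V = V * (diag_matrix n a + diag_matrix n b) * madj V"
    using assms by (simp add: add_mult_distrib_mat[of _ n n _ _ n] mult_add_distrib_mat[of _ n n _ n])
  ultimately show ?thesis by simp
qed

lemma conj_diag_one:
  assumes "unitary n V"
  shows "V * diag_matrix n (\<lambda>_. 1) * madj V = 1\<^sub>m n"
  using unitaryD[OF assms] by (simp add: diag_matrix_one)

lemma conj_diag_zero:
  assumes "V \<in> carrier_mat n n"
  shows "V * diag_matrix n (\<lambda>_. 0) * madj V = 0\<^sub>m n n"
proof -
  have "diag_matrix n (\<lambda>_. 0) = 0\<^sub>m n n" by (intro eq_matI) auto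
  then show ?thesis using assms by simp
qed

lemma conj_diag_power:
  assumes "unitary n V"
  shows "(V * diag_matrix n a * madj V) ^\<^sub>m k = V * diag_matrix n (\<lambda>i. a i ^ k) * madj V"
proof (induction k)
  case 0
  have "(V * diag_matrix n a * madj V) ^\<^sub>m 0 = 1\<^sub>m n" using unitaryD[OF assms] by simp
  then show ?case using conj_diag_one[OF assms] by simp
next
  case (Suc k)
  then show ?case using conj_diag_mult[OF assms, of "\<lambda>i. a i ^ k" a] by (simp add: mult.commute)
qed

lemma conj_diag_trace:
  assumes "unitary n V"
  shows "mtrace (V * diag_matrix n a * madj V) = (\<Sum>i<n. a i)"
proof -
  note u = unitaryD[OF assms]
  have "mtrace (V * diag_matrix n a * madj V) = (\<Sum>i<n. \<Sum>k<n. V $$ (i,k) * a k * cnj (V $$ (i,k)))"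
    unfolding mtrace_def using u by (simp add: conj_diag_index del: index_mult_mat_sum)
  also have "\<dots> = (\<Sum>k<n. a k * (\<Sum>i<n. cnj (V $$ (i,k)) * V $$ (i,k)))"
    by (subst sum.swap) (simp add: sum_distrib_left mult_ac)
  also have "\<dots> = (\<Sum>k<n. a k)"
  proof (rule sum.cong[OF refl])
    fix k assume k: "k \<in> {..<n}"
    have "(\<Sum>i<n. cnj (V $$ (i,k)) * V $$ (i,k)) = (madj V * V) $$ (k,k)" using u(1) k by simp
    also have "\<dots> = 1" using u k by simp
    finally show "a k * (\<Sum>i<n. cnj (V $$ (i,k)) * V $$ (i,k)) = a k" using u k by simp
  qed
  finally show ?thesis .
qed

lemma exp_sums_complex: "(\<lambda>k. (x::complex) ^ k / of_nat (fact k)) sums exp x"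
  using exp_converges[of x] by (simp add: scaleR_conv_of_real divide_inverse mult.commute)

lemma mexp_conj_diag:
  assumes "unitary n V"
  shows "mexp (V * diag_matrix n a * madj V) = V * diag_matrix n (\<lambda>i. exp (a i)) * madj V"
proof -
  note u = unitaryD[OF assms]
  show ?thesis (is "?E = ?D")
  proof (rule eq_matI)
    fix i j assume "i < dim_row ?D" "j < dim_col ?D"
    then have i: "i < n" and j: "j < n" using u by auto
    have "(\<lambda>k. ((V * diag_matrix n a * madj V) ^\<^sub>m k) $$ (i,j) / of_nat (fact k))
       = (\<lambda>k. \<Sum>l<n. V $$ (i,l) * cnj (V $$ (j,l)) * (a l ^ k / of_nat (fact k)))"
      using i j u by (simp add: conj_diag_power[OF assms] conj_diag_index sum_divide_distrib mult_ac del: index_mult_mat_sum)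
    moreover have "(\<lambda>k. \<Sum>l<n. V $$ (i,l) * cnj (V $$ (j,l)) * (a l ^ k / of_nat (fact k)))
       sums (\<Sum>l<n. V $$ (i,l) * cnj (V $$ (j,l)) * exp (a l))"
      by (intro sums_sum sums_mult exp_sums_complex)
    ultimately have "mexp (V * diag_matrix n a * madj V) $$ (i,j) = (\<Sum>l<n. V $$ (i,l) * cnj (V $$ (j,l)) * exp (a l))"
      unfolding mexp_def using i j u by (simp add: sums_unique[symmetric])
    also have "\<dots> = (V * diag_matrix n (\<lambda>i. exp (a i)) * madj V) $$ (i,j)"
      using i j u by (simp add: conj_diag_index mult_ac del: index_mult_mat_sum)
    finally show "?E $$ (i,j) = ?D $$ (i,j)" .
  qed (use u in \<open>auto simp: mexp_def\<close>)
qed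

lemma unitary_conj_cancel:
  assumes Q: "unitary n Q" and E: "E \<in> carrier_mat n n"
  shows "madj Q * (Q * E * madj Q) * Q = E"
proof -
  note q = unitaryD[OF Q]
  have "madj Q * (Q * E * madj Q) * Q = madj Q * (Q * E)"
    using q E by (simp add: assoc_mult_mat[of _ n n _ n _ n])
  also have "\<dots> = E" by (rule mult_left_inverse_cancel[OF q(2) q(1) E q(3)])
  finally show ?thesis .
qed

lemma unitary_unconj:
  assumes Q: "unitary n Q" and X: "X \<in> carrier_mat n n"
  shows "Q * (madj Q * X * Q) * madj Q = X"
  using unitary_conj_cancel[of n "madj Q" X] Q X unfolding unitary_def by simp

lemma unitary_conj_mult:
  assumes Q: "unitary n Q" and X: "X \<in> carrier_mat n n" and Y: "Y \<in> carrier_mat n n"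
  shows "madj Q * (X * Y) * Q = (madj Q * X * Q) * (madj Q * Y * Q)"
proof -
  note q = unitaryD[OF Q]
  have "(madj Q * X * Q) * (madj Q * Y * Q) = madj Q * (X * (Q * (madj Q * (Y * Q))))"
    using q X Y by (simp add: assoc_mult_mat[of _ n n _ n _ n])
  also have "Q * (madj Q * (Y * Q)) = Y * Q"
    by (rule mult_left_inverse_cancel[OF q(1) q(2) mult_carrier_sq[OF Y q(1)] q(4)])
  finally show ?thesis using q X Y by (simp add: assoc_mult_mat[of _ n n _ n _ n])
qed

lemma commute_of_unitary_conj:
  assumes U: "unitary n U" and X: "X \<in> carrier_mat n n" and e: "U * X * madj U = X"
  shows "U * X = X * U"
proof -
  note u = unitaryD[OF U]
  have "U * X = U * X * (madj U * U)" using u X by simp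
  also have "\<dots> = (U * X * madj U) * U" using u X by (simp add: assoc_mult_mat[of _ n n _ n _ n])
  finally show ?thesis using e by simp
qed

lemma commute_madj:
  assumes U: "unitary n U" and X: "X \<in> carrier_mat n n" and e: "U * X = X * U"
  shows "madj U * X = X * madj U"
proof -
  note u = unitaryD[OF U]
  have "madj U * X * U = madj U * (U * X)"
    using e u X by (simp add: assoc_mult_mat[of _ n n _ n _ n])
  also have "\<dots> = X" by (rule mult_left_inverse_cancel[OF u(2) u(1) X u(3)])
  finally have "madj U * X * U = X" .
  then show ?thesis using commute_of_unitary_conj[of n "madj U" X] U X unfolding unitary_def by simp
qed

lemma commute_conj_diag_fun:
  assumes Q: "unitary n Q" and U: "U \<in> carrier_mat n n"
    and c: "U * (Q * diag_matrix n d * madj Q) = (Q * diag_matrix n d * madj Q) * U"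
    and F: "\<And>p q. p < n \<Longrightarrow> q < n \<Longrightarrow> d p = d q \<Longrightarrow> F p = F q"
  shows "U * (Q * diag_matrix n F * madj Q) = (Q * diag_matrix n F * madj Q) * U"
proof -
  note q = unitaryD[OF Q]
  define U' where "U' = madj Q * U * Q"
  have U': "U' \<in> carrier_mat n n" unfolding U'_def using q U by simp
  have conj: "madj Q * (U * (Q * diag_matrix n f * madj Q)) * Q = U' * diag_matrix n f"
    "madj Q * ((Q * diag_matrix n f * madj Q) * U) * Q = diag_matrix n f * U'" for f
    unfolding U'_def unitary_conj_mult[OF Q U conj_diag_carrier[OF q(1)]]
      unitary_conj_mult[OF Q conj_diag_carrier[OF q(1)] U] unitary_conj_cancel[OF Q diag_matrix_carrier] by simp_all
  have e: "U' * diag_matrix n d = diag_matrix n d * U'" using c conj[of d] by metis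
  have "U' * diag_matrix n F = diag_matrix n F * U'"
  proof (rule eq_matI)
    fix p r assume "p < dim_row (diag_matrix n F * U')" "r < dim_col (diag_matrix n F * U')"
    then have p: "p < n" and r: "r < n" using U' by auto
    have "U' $$ (p,r) * d r = d p * U' $$ (p,r)"
      using arg_cong[OF e, of "\<lambda>X. X $$ (p,r)"] U' p r
      by (simp add: index_mult_diag_matrix index_diag_matrix_mult del: index_mult_mat_sum)
    then have "U' $$ (p,r) = 0 \<or> d p = d r" by (metis mult.commute mult_cancel_left)
    then show "(U' * diag_matrix n F) $$ (p,r) = (diag_matrix n F * U') $$ (p,r)"
      using F[OF p r] U' p r by (auto simp: index_mult_diag_matrix index_diag_matrix_mult simp del: index_mult_mat_sum)
  qed (use U' in auto)
  then have "madj Q * (U * (Q * diag_matrix n F * madj Q)) * Q = madj Q * ((Q * diag_matrix n F * madj Q) * U) * Q"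
    unfolding conj .
  then show ?thesis using unitary_unconj[OF Q] U q by (metis conj_diag_carrier mult_carrier_sq)
qed

section \<open>Kronecker products, traces and partial traces\<close>

lemma sum_lessThan_mult:
  fixes f :: "nat \<Rightarrow> 'a::comm_monoid_add"
  shows "(\<Sum>p<a*b. f p) = (\<Sum>i<a. \<Sum>k<b. f (i*b+k))"
proof -
  have "(\<Sum>p<a*b. f p) = (\<Sum>i<a. \<Sum>p\<in>{i*b..<i*b+b}. f p)" using sum.nat_group[of f b a] by simp
  also have "\<dots> = (\<Sum>i<a. \<Sum>k<b. f (i*b+k))"
  proof (rule sum.cong[OF refl])
    fix i
    have "{i*b..<i*b+b} = {0 + i*b..<b + i*b}" by (simp add: add.commute)
    then have "(\<Sum>p\<in>{i*b..<i*b+b}. f p) = (\<Sum>k\<in>{0..<b}. f (k + i*b))" by (simp only: sum.shift_bounds_nat_ivl)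
    then show "(\<Sum>p\<in>{i*b..<i*b+b}. f p) = (\<Sum>k<b. f (i*b+k))" by (simp add: atLeast0LessThan add.commute)
  qed
  finally show ?thesis .
qed

lemma mult_add_div_mod[simp]: "k < (b::nat) \<Longrightarrow> (i*b+k) div b = i" "k < (b::nat) \<Longrightarrow> (i*b+k) mod b = k"
  by auto

lemma mult_add_less_mult: "k < (b::nat) \<Longrightarrow> i < a \<Longrightarrow> i*b+k < a*b"
proof -
  assume "k < b" "i < a"
  then have "i*b+k < i*b+b" by simp
  also have "\<dots> = (Suc i)*b" by simp
  also have "\<dots> \<le> a*b" using \<open>i < a\<close> by (intro mult_le_mono1) simp
  finally show ?thesis .
qed

lemma div_less_of_less_mult: "p < a*b \<Longrightarrow> p div b < (a::nat)"
  by (simp add: less_mult_imp_div_less)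

lemma mod_less_of_less_mult: "p < a*b \<Longrightarrow> p mod b < (b::nat)"
  by (metis mod_less_divisor mult_0_right not_less_zero neq0_conv)

lemma div_mod_eq_iff: "(i div b = j div b \<and> i mod b = j mod (b::nat)) \<longleftrightarrow> i = j"
  by (metis div_mult_mod_eq)

lemma kron_dims[simp]: "dim_row (kron A B) = dim_row A * dim_row B" "dim_col (kron A B) = dim_col A * dim_col B"
  by (auto simp: kron_def)

lemma kron_carrier[simp]: "A \<in> carrier_mat a a' \<Longrightarrow> B \<in> carrier_mat b b' \<Longrightarrow> kron A B \<in> carrier_mat (a*b) (a'*b')"
  unfolding carrier_mat_def by simp

lemma kron_index[simp]: "i < dim_row A * dim_row B \<Longrightarrow> j < dim_col A * dim_col B \<Longrightarrow>
  kron A B $$ (i,j) = A $$ (i div dim_row B, j div dim_col B) * B $$ (i mod dim_row B, j mod dim_col B)"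
  by (simp add: kron_def)

lemma madj_kron: "madj (kron A B) = kron (madj A) (madj B)"
proof (rule eq_matI)
  fix i j assume "i < dim_row (kron (madj A) (madj B))" "j < dim_col (kron (madj A) (madj B))"
  then have i: "i < dim_col A * dim_col B" and j: "j < dim_row A * dim_row B" by auto
  have b: "i div dim_col B < dim_col A" "i mod dim_col B < dim_col B" "j div dim_row B < dim_row A" "j mod dim_row B < dim_row B"
    using div_less_of_less_mult[OF i] mod_less_of_less_mult[OF i] div_less_of_less_mult[OF j] mod_less_of_less_mult[OF j] by auto
  show "madj (kron A B) $$ (i,j) = kron (madj A) (madj B) $$ (i,j)"
    using i j b by simp
qed auto

lemma kron_mult:
  assumes A: "A \<in> carrier_mat a a'" and C: "C \<in> carrier_mat a' c" and B: "B \<in> carrier_mat b b'" and D: "D \<in> carrier_mat b' d"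
  shows "kron A B * kron C D = kron (A * C) (B * D)"
proof (rule eq_matI)
  fix i j assume "i < dim_row (kron (A * C) (B * D))" "j < dim_col (kron (A * C) (B * D))"
  then have i: "i < a*b" and j: "j < c*d" using A B C D by auto
  have "(kron A B * kron C D) $$ (i,j) = (\<Sum>p<a'*b'. kron A B $$ (i,p) * kron C D $$ (p,j))"
    using A B C D i j by simp
  also have "\<dots> = (\<Sum>x<a'. \<Sum>y<b'. kron A B $$ (i,x*b'+y) * kron C D $$ (x*b'+y,j))"
    by (rule sum_lessThan_mult)
  also have "\<dots> = (\<Sum>x<a'. \<Sum>y<b'. (A $$ (i div b, x) * C $$ (x, j div d)) * (B $$ (i mod b, y) * D $$ (y, j mod d)))"
    using A B C D i j by (intro sum.cong refl) (simp add: mult_add_less_mult)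
  also have "\<dots> = (\<Sum>x<a'. A $$ (i div b, x) * C $$ (x, j div d)) * (\<Sum>y<b'. B $$ (i mod b, y) * D $$ (y, j mod d))"
    by (simp add: sum_product)
  also have "\<dots> = kron (A * C) (B * D) $$ (i,j)"
    using A B C D i j by (simp add: div_less_of_less_mult mod_less_of_less_mult)
  finally show "(kron A B * kron C D) $$ (i,j) = kron (A * C) (B * D) $$ (i,j)" .
qed (use A B C D in auto)

lemma kron_one: "kron (1\<^sub>m a) (1\<^sub>m b) = 1\<^sub>m (a*b)"
proof (rule eq_matI)
  fix i j assume "i < dim_row (1\<^sub>m (a*b))" "j < dim_col (1\<^sub>m (a*b))"
  then have i: "i < a*b" and j: "j < a*b" by auto
  show "kron (1\<^sub>m a) (1\<^sub>m b) $$ (i,j) = 1\<^sub>m (a*b) $$ (i,j)"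
    using i j div_mod_eq_iff[of i b j] by (auto simp: div_less_of_less_mult mod_less_of_less_mult)
qed auto

lemma kron_diag_matrix:
  "kron (diag_matrix a f) (diag_matrix b g) = diag_matrix (a*b) (\<lambda>p. f (p div b) * g (p mod b))"
  (is "?K = ?D")
proof (rule eq_matI)
  fix i j assume "i < dim_row ?D" "j < dim_col ?D"
  then have i: "i < a*b" and j: "j < a*b" by auto
  show "?K $$ (i,j) = ?D $$ (i,j)"
    using i j div_mod_eq_iff[of i b j] by (auto simp: div_less_of_less_mult mod_less_of_less_mult)
qed auto

lemma kron_zero_left: "B \<in> carrier_mat b b' \<Longrightarrow> kron (0\<^sub>m a a') B = 0\<^sub>m (a*b) (a'*b')"
  by (intro eq_matI) (auto simp: div_less_of_less_mult)

lemma unitary_kron: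
  assumes "unitary a V" "unitary b W"
  shows "unitary (a*b) (kron V W)"
proof -
  note v = unitaryD[OF assms(1)] and w = unitaryD[OF assms(2)]
  have "madj (kron V W) * kron V W = kron (madj V * V) (madj W * W)"
    unfolding madj_kron by (rule kron_mult[OF v(2) v(1) w(2) w(1)])
  moreover have "kron V W * madj (kron V W) = kron (V * madj V) (W * madj W)"
    unfolding madj_kron by (rule kron_mult[OF v(1) v(2) w(1) w(2)])
  ultimately show ?thesis using v w unfolding unitary_def by (simp add: kron_one)
qed

lemma kron_conj_diag:
  assumes V: "V \<in> carrier_mat a a" and W: "W \<in> carrier_mat b b"
  shows "kron (V * diag_matrix a f * madj V) (W * diag_matrix b g * madj W)
       = kron V W * diag_matrix (a*b) (\<lambda>p. f (p div b) * g (p mod b)) * madj (kron V W)"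
proof -
  have "kron (V * diag_matrix a f * madj V) (W * diag_matrix b g * madj W)
      = kron (V * diag_matrix a f) (W * diag_matrix b g) * kron (madj V) (madj W)"
    using V W by (intro kron_mult[symmetric]) auto
  also have "kron (V * diag_matrix a f) (W * diag_matrix b g) = kron V W * kron (diag_matrix a f) (diag_matrix b g)"
    using V W by (intro kron_mult[symmetric]) auto
  finally show ?thesis by (simp add: kron_diag_matrix madj_kron)
qed

lemma commute_kron_conj_diag_fun:
  assumes V: "unitary a V" and W: "unitary e W" and U: "U \<in> carrier_mat (a*e) (a*e)"
    and c: "U * kron (V * diag_matrix a x * madj V) (W * diag_matrix e y * madj W)
          = kron (V * diag_matrix a x * madj V) (W * diag_matrix e y * madj W) * U"
    and F: "\<And>i k i' k'. i < a \<Longrightarrow> k < e \<Longrightarrow> i' < a \<Longrightarrow> k' < e \<Longrightarrow> x i * y k = x i' * y k' \<Longrightarrow> f i k = f i' k'"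
  shows "U * (kron V W * diag_matrix (a*e) (\<lambda>p. f (p div e) (p mod e)) * madj (kron V W))
       = (kron V W * diag_matrix (a*e) (\<lambda>p. f (p div e) (p mod e)) * madj (kron V W)) * U"
proof (rule commute_conj_diag_fun[OF unitary_kron[OF V W] U])
  show "U * (kron V W * diag_matrix (a*e) (\<lambda>p. x (p div e) * y (p mod e)) * madj (kron V W))
      = (kron V W * diag_matrix (a*e) (\<lambda>p. x (p div e) * y (p mod e)) * madj (kron V W)) * U"
    using c kron_conj_diag[OF unitaryD(1)[OF V] unitaryD(1)[OF W]] by simp
qed (use F in \<open>auto simp: div_less_of_less_mult mod_less_of_less_mult\<close>)

lemma mtrace_add: "A \<in> carrier_mat n n \<Longrightarrow> B \<in> carrier_mat n n \<Longrightarrow> mtrace (A + B) = mtrace A + mtrace B"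
  by (simp add: mtrace_def sum.distrib)

lemma mtrace_minus: "A \<in> carrier_mat n n \<Longrightarrow> B \<in> carrier_mat n n \<Longrightarrow> mtrace (A - B) = mtrace A - mtrace B"
  by (simp add: mtrace_def sum_subtractf)

lemma mtrace_smult: "A \<in> carrier_mat n n \<Longrightarrow> mtrace (c \<cdot>\<^sub>m A) = c * mtrace A"
  by (simp add: mtrace_def sum_distrib_left)

lemma mtrace_zero[simp]: "mtrace (0\<^sub>m n n) = 0"
  by (simp add: mtrace_def)

lemma mtrace_mult_comm:
  assumes "A \<in> carrier_mat n m" "B \<in> carrier_mat m n"
  shows "mtrace (A * B) = mtrace (B * A)"
proof -
  have "mtrace (A * B) = (\<Sum>i<n. \<Sum>k<m. A $$ (i,k) * B $$ (k,i))" using assms by (simp add: mtrace_def)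
  also have "\<dots> = (\<Sum>k<m. \<Sum>i<n. B $$ (k,i) * A $$ (i,k))" by (subst sum.swap) (simp add: mult.commute)
  also have "\<dots> = mtrace (B * A)" using assms by (simp add: mtrace_def)
  finally show ?thesis .
qed

lemma ptrace2_carrier[simp]: "ptrace2 a b X \<in> carrier_mat a a"
  and ptrace2_dims[simp]: "dim_row (ptrace2 a b X) = a" "dim_col (ptrace2 a b X) = a"
  by (auto simp: ptrace2_def)

lemma ptrace2_index[simp]: "i < a \<Longrightarrow> k < a \<Longrightarrow> ptrace2 a b X $$ (i,k) = (\<Sum>\<beta><b. X $$ (i*b+\<beta>, k*b+\<beta>))"
  by (simp add: ptrace2_def)

lemma mtrace_ptrace2:
  assumes "X \<in> carrier_mat (a*b) (a*b)"
  shows "mtrace (ptrace2 a b X) = mtrace X"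
  using assms by (simp add: mtrace_def sum_lessThan_mult)

lemma ptrace2_kron:
  assumes "X \<in> carrier_mat a a" "Y \<in> carrier_mat b b"
  shows "ptrace2 a b (kron X Y) = mtrace Y \<cdot>\<^sub>m X"
  using assms by (intro eq_matI) (auto simp: mtrace_def mult_add_less_mult sum_distrib_left[symmetric] mult.commute)

lemma ptrace2_minus:
  "A \<in> carrier_mat (a*b) (a*b) \<Longrightarrow> B \<in> carrier_mat (a*b) (a*b) \<Longrightarrow> ptrace2 a b (A - B) = ptrace2 a b A - ptrace2 a b B"
  by (intro eq_matI) (auto simp: mult_add_less_mult sum_subtractf)

lemma ptrace2_zero: "ptrace2 a b (0\<^sub>m (a*b) (a*b)) = 0\<^sub>m a a"
  by (intro eq_matI) (auto simp: mult_add_less_mult)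

lemma ptrace2_mult_right:
  assumes Z: "Z \<in> carrier_mat (a*b) (a*b)" and X: "X \<in> carrier_mat a a"
  shows "ptrace2 a b (Z * kron X (1\<^sub>m b)) = ptrace2 a b Z * X"
proof (rule eq_matI)
  fix i k assume "i < dim_row (ptrace2 a b Z * X)" "k < dim_col (ptrace2 a b Z * X)"
  then have i: "i < a" and k: "k < a" using X by auto
  have "ptrace2 a b (Z * kron X (1\<^sub>m b)) $$ (i,k) = (\<Sum>\<beta><b. \<Sum>p<a*b. Z $$ (i*b+\<beta>, p) * kron X (1\<^sub>m b) $$ (p, k*b+\<beta>))"
    using Z X i k by (simp add: mult_add_less_mult)
  also have "\<dots> = (\<Sum>\<beta><b. \<Sum>x<a. \<Sum>y<b. Z $$ (i*b+\<beta>, x*b+y) * kron X (1\<^sub>m b) $$ (x*b+y, k*b+\<beta>))"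
    by (simp only: sum_lessThan_mult)
  also have "\<dots> = (\<Sum>\<beta><b. \<Sum>x<a. \<Sum>y<b. if y = \<beta> then Z $$ (i*b+\<beta>, x*b+\<beta>) * X $$ (x,k) else 0)"
    using Z X i k by (intro sum.cong refl) (auto simp: mult_add_less_mult)
  also have "\<dots> = (\<Sum>\<beta><b. \<Sum>x<a. Z $$ (i*b+\<beta>, x*b+\<beta>) * X $$ (x,k))"
    by (simp add: sum.delta)
  also have "\<dots> = (\<Sum>x<a. (\<Sum>\<beta><b. Z $$ (i*b+\<beta>, x*b+\<beta>)) * X $$ (x,k))"
    by (subst sum.swap) (simp add: sum_distrib_right)
  also have "\<dots> = (ptrace2 a b Z * X) $$ (i,k)" using X i k by simp
  finally show "ptrace2 a b (Z * kron X (1\<^sub>m b)) $$ (i,k) = (ptrace2 a b Z * X) $$ (i,k)" .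
qed (use X in auto)

lemma ptrace2_mult_left:
  assumes Z: "Z \<in> carrier_mat (a*b) (a*b)" and X: "X \<in> carrier_mat a a"
  shows "ptrace2 a b (kron X (1\<^sub>m b) * Z) = X * ptrace2 a b Z"
proof (rule eq_matI)
  fix i k assume "i < dim_row (X * ptrace2 a b Z)" "k < dim_col (X * ptrace2 a b Z)"
  then have i: "i < a" and k: "k < a" using X by auto
  have "ptrace2 a b (kron X (1\<^sub>m b) * Z) $$ (i,k) = (\<Sum>\<beta><b. \<Sum>p<a*b. kron X (1\<^sub>m b) $$ (i*b+\<beta>, p) * Z $$ (p, k*b+\<beta>))"
    using Z X i k by (simp add: mult_add_less_mult)
  also have "\<dots> = (\<Sum>\<beta><b. \<Sum>x<a. \<Sum>y<b. kron X (1\<^sub>m b) $$ (i*b+\<beta>, x*b+y) * Z $$ (x*b+y, k*b+\<beta>))"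
    by (simp only: sum_lessThan_mult)
  also have "\<dots> = (\<Sum>\<beta><b. \<Sum>x<a. \<Sum>y<b. if y = \<beta> then X $$ (i,x) * Z $$ (x*b+\<beta>, k*b+\<beta>) else 0)"
    using Z X i k by (intro sum.cong refl) (auto simp: mult_add_less_mult)
  also have "\<dots> = (\<Sum>\<beta><b. \<Sum>x<a. X $$ (i,x) * Z $$ (x*b+\<beta>, k*b+\<beta>))"
    by (simp add: sum.delta)
  also have "\<dots> = (\<Sum>x<a. X $$ (i,x) * (\<Sum>\<beta><b. Z $$ (x*b+\<beta>, k*b+\<beta>)))"
    by (subst sum.swap) (simp add: sum_distrib_left)
  also have "\<dots> = (X * ptrace2 a b Z) $$ (i,k)" using X i k by simp
  finally show "ptrace2 a b (kron X (1\<^sub>m b) * Z) $$ (i,k) = (X * ptrace2 a b Z) $$ (i,k)" .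
qed (use X in auto)

lemma mtrace_ptrace2_right:
  assumes "W \<in> carrier_mat (a*b) (a*b)" "X \<in> carrier_mat a a"
  shows "mtrace (ptrace2 a b W * X) = mtrace (W * kron X (1\<^sub>m b))"
  using assms by (simp add: ptrace2_mult_right[symmetric] mtrace_ptrace2)

lemma mtrace_ptrace2_left:
  assumes "W \<in> carrier_mat (a*b) (a*b)" "X \<in> carrier_mat a a"
  shows "mtrace (X * ptrace2 a b W) = mtrace (kron X (1\<^sub>m b) * W)"
  using assms by (simp add: ptrace2_mult_left[symmetric] mtrace_ptrace2)

lemma foldr_add_carrier:
  "(\<And>j. j \<in> set xs \<Longrightarrow> f j \<in> carrier_mat d d) \<Longrightarrow> foldr (\<lambda>j A. f j + A) xs (0\<^sub>m d d) \<in> carrier_mat d d"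
  by (induction xs) auto

lemma foldr_add_mult:
  assumes "\<And>j. j \<in> set xs \<Longrightarrow> f j \<in> carrier_mat d d" and P: "P \<in> carrier_mat d d"
  shows "foldr (\<lambda>j A. f j + A) xs (0\<^sub>m d d) * P = foldr (\<lambda>j A. f j * P + A) xs (0\<^sub>m d d)"
  using assms(1)
proof (induction xs)
  case Nil
  then show ?case using P by simp
next
  case (Cons x xs)
  then show ?case using P foldr_add_carrier[of xs f d] by (simp add: add_mult_distrib_mat[of _ d d _ _ d])
qed

lemma foldr_add_zero:
  fixes f :: "nat \<Rightarrow> complex mat"
  shows "(\<And>j. j \<in> set xs \<Longrightarrow> f j = 0\<^sub>m d d) \<Longrightarrow> foldr (\<lambda>j A. f j + A) xs (0\<^sub>m d d) = 0\<^sub>m d d"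
  by (induction xs) (auto simp: left_add_zero_mat[OF zero_carrier_mat])

lemma mtrace_foldr_add:
  "(\<And>j. j \<in> set xs \<Longrightarrow> f j \<in> carrier_mat d d) \<Longrightarrow> mtrace (foldr (\<lambda>j A. f j + A) xs (0\<^sub>m d d)) = (\<Sum>j\<leftarrow>xs. mtrace (f j))"
proof (induction xs)
  case (Cons x xs)
  then show ?case using foldr_add_carrier[of xs f d] by (simp add: mtrace_add[of _ d])
qed simp

section \<open>Hamiltonians, unitary evolutions and Gibbs states\<close>

lemma self_adjoint_add: "self_adjoint n A \<Longrightarrow> self_adjoint n B \<Longrightarrow> self_adjoint n (A + B)"
  unfolding self_adjoint_def using madj_add[of A n n B] by simp

lemma self_adjoint_kron: "self_adjoint a A \<Longrightarrow> self_adjoint b B \<Longrightarrow> self_adjoint (a*b) (kron A B)"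
  unfolding self_adjoint_def by (simp add: madj_kron)

lemma self_adjoint_one: "self_adjoint n (1\<^sub>m n)"
  unfolding self_adjoint_def by simp

lemma unitary_mexp:
  assumes "self_adjoint n H"
  shows "unitary n (mexp ((- \<i> * complex_of_real t) \<cdot>\<^sub>m H))"
proof -
  obtain V l where V: "unitary n V" and H: "H = V * diag_matrix n (\<lambda>i. complex_of_real (l i)) * madj V"
    using self_adjoint_spectral[OF assms] by blast
  note v = unitaryD[OF V]
  define a where "a i = cis (- (t * l i))" for i
  have U: "mexp ((- \<i> * complex_of_real t) \<cdot>\<^sub>m H) = V * diag_matrix n a * madj V"
    unfolding H a_def cis_conv_exp by (simp add: conj_diag_smult[OF v(1)] mexp_conj_diag[OF V] mult.assoc)
  have "(\<lambda>i. cnj (a i) * a i) = (\<lambda>_. 1)"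
    unfolding a_def by (simp add: cis_cnj cis_mult)
  then have "madj (V * diag_matrix n a * madj V) * (V * diag_matrix n a * madj V) = 1\<^sub>m n"
    using conj_diag_one[OF V] by (simp add: conj_diag_madj[OF v(1)] conj_diag_mult[OF V])
  then show ?thesis unfolding U using v by (intro unitaryI) simp_all
qed

lemma gibbs_spectral:
  assumes "self_adjoint n H" "n > 0"
  shows "\<exists>W lam Z. unitary n W \<and> H = W * diag_matrix n (\<lambda>i. complex_of_real (lam i)) * madj W \<and> Z > 0 \<and>
     gibbs b H = W * diag_matrix n (\<lambda>i. complex_of_real (exp (- b * lam i) / Z)) * madj W \<and>
     (\<Sum>i<n. exp (- b * lam i) / Z) = 1"
proof -
  obtain W lam where W: "unitary n W" and H: "H = W * diag_matrix n (\<lambda>i. complex_of_real (lam i)) * madj W"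
    using self_adjoint_spectral[OF assms(1)] by blast
  note w = unitaryD[OF W]
  define Z where "Z = (\<Sum>i<n. exp (- b * lam i))"
  have Z: "Z > 0" unfolding Z_def using assms(2) by (intro sum_pos) auto
  have me: "mexp ((- complex_of_real b) \<cdot>\<^sub>m H) = W * diag_matrix n (\<lambda>i. complex_of_real (exp (- b * lam i))) * madj W"
    unfolding H by (simp add: conj_diag_smult[OF w(1)] mexp_conj_diag[OF W] exp_of_real[symmetric])
  have tr: "mtrace (W * diag_matrix n (\<lambda>i. complex_of_real (exp (- b * lam i))) * madj W) = complex_of_real Z"
    unfolding conj_diag_trace[OF W] Z_def by simp
  have "gibbs b H = W * diag_matrix n (\<lambda>i. complex_of_real (exp (- b * lam i) / Z)) * madj W"
    unfolding gibbs_def me tr using Z by (simp add: conj_diag_smult[OF w(1)])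
  moreover have "(\<Sum>i<n. exp (- b * lam i) / Z) = 1" using Z unfolding Z_def[symmetric]
    by (simp add: sum_divide_distrib[symmetric] Z_def)
  ultimately show ?thesis using W H Z by blast
qed

lemma gibbs_carrier: "self_adjoint n H \<Longrightarrow> gibbs b H \<in> carrier_mat n n"
  unfolding gibbs_def mexp_def self_adjoint_def by auto

lemma gibbs_trace:
  assumes "self_adjoint n H" "n > 0"
  shows "mtrace (gibbs b H) = 1"
proof -
  obtain W lam Z where W: "unitary n W" and Z: "Z > 0" and
    g: "gibbs b H = W * diag_matrix n (\<lambda>i. complex_of_real (exp (- b * lam i) / Z)) * madj W" and
    s: "(\<Sum>i<n. exp (- b * lam i) / Z) = 1"
    using gibbs_spectral[OF assms, of b] by blast
  have "mtrace (gibbs b H) = complex_of_real (\<Sum>i<n. exp (- b * lam i) / Z)"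
    unfolding g conj_diag_trace[OF W] by (simp only: of_real_sum)
  also have "\<dots> = 1" by (simp only: s of_real_1)
  finally show ?thesis .
qed

lemma gibbs_commute_kernel:
  assumes U: "U \<in> carrier_mat (a*e) (a*e)" and H: "self_adjoint e H" and e: "e > 0" and Vb: "unitary a Vb"
    and comm: "U * kron (Vb * diag_matrix a (\<lambda>i. complex_of_real (b i)) * madj Vb) (gibbs \<beta> H)
             = kron (Vb * diag_matrix a (\<lambda>i. complex_of_real (b i)) * madj Vb) (gibbs \<beta> H) * U"
  shows "U * kron (Vb * diag_matrix a (\<lambda>i. if b i = 0 then 1 else 0) * madj Vb) (1\<^sub>m e)
       = kron (Vb * diag_matrix a (\<lambda>i. if b i = 0 then 1 else 0) * madj Vb) (1\<^sub>m e) * U"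
proof -
  obtain W lam Z where W: "unitary e W" and Z: "Z > 0"
    and G: "gibbs \<beta> H = W * diag_matrix e (\<lambda>k. complex_of_real (exp (- \<beta> * lam k) / Z)) * madj W"
    using gibbs_spectral[OF H e, of \<beta>] by blast
  define c where "c i = (if b i = 0 then 1 else 0 :: complex)" for i
  have "U * (kron Vb W * diag_matrix (a*e) (\<lambda>p. c (p div e) * 1) * madj (kron Vb W))
      = (kron Vb W * diag_matrix (a*e) (\<lambda>p. c (p div e) * 1) * madj (kron Vb W)) * U"
  proof (rule commute_kron_conj_diag_fun[OF Vb W U comm[unfolded G], of "\<lambda>i k. c i * 1"])
    fix i k i' k'
    assume "complex_of_real (b i) * complex_of_real (exp (- \<beta> * lam k) / Z)
      = complex_of_real (b i') * complex_of_real (exp (- \<beta> * lam k') / Z)"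
    then have "b i * (exp (- \<beta> * lam k) / Z) = b i' * (exp (- \<beta> * lam k') / Z)"
      by (simp only: of_real_mult[symmetric] of_real_eq_iff)
    then show "c i * 1 = c i' * 1" using Z unfolding c_def by auto
  qed
  moreover have "kron Vb W * diag_matrix (a*e) (\<lambda>p. c (p div e) * 1) * madj (kron Vb W)
      = kron (Vb * diag_matrix a c * madj Vb) (1\<^sub>m e)"
    using kron_conj_diag[OF unitaryD(1)[OF Vb] unitaryD(1)[OF W], of c "\<lambda>_. 1"] conj_diag_one[OF W] by simp
  ultimately show ?thesis unfolding c_def by simp
qed

text \<open>For faithful B, K \<otimes> 1 + 1 \<otimes> H = - (log (B \<otimes> gibbs beta H) + log Z) / beta is a function
  of B \<otimes> gibbs beta H.\<close>

lemma gibbs_commute_log: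
  assumes U: "U \<in> carrier_mat (a*e) (a*e)" and H: "self_adjoint e H" and e: "e > 0" and Vb: "unitary a Vb"
    and comm: "U * kron (Vb * diag_matrix a (\<lambda>i. complex_of_real (b i)) * madj Vb) (gibbs \<beta> H)
             = kron (Vb * diag_matrix a (\<lambda>i. complex_of_real (b i)) * madj Vb) (gibbs \<beta> H) * U"
    and \<beta>: "\<beta> \<noteq> 0" and b: "\<And>i. i < a \<Longrightarrow> b i > 0"
  defines "K \<equiv> Vb * diag_matrix a (\<lambda>i. complex_of_real (- ln (b i) / \<beta>)) * madj Vb"
  shows "U * (kron K (1\<^sub>m e) + kron (1\<^sub>m a) H) = (kron K (1\<^sub>m e) + kron (1\<^sub>m a) H) * U"
proof -
  obtain W lam Z where W: "unitary e W" and HW: "H = W * diag_matrix e (\<lambda>k. complex_of_real (lam k)) * madj W"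
    and Z: "Z > 0" and G: "gibbs \<beta> H = W * diag_matrix e (\<lambda>k. complex_of_real (exp (- \<beta> * lam k) / Z)) * madj W"
    using gibbs_spectral[OF H e, of \<beta>] by blast
  define kl where "kl i = complex_of_real (- ln (b i) / \<beta>)" for i
  define hl where "hl k = complex_of_real (lam k)" for k
  have log: "- ln (b i) / \<beta> + lam k = - (ln (b i * (exp (- \<beta> * lam k) / Z)) + ln Z) / \<beta>" if "i < a" for i k
    using b[OF that] Z \<beta> by (simp add: ln_mult ln_div field_simps)
  have "U * (kron Vb W * diag_matrix (a*e) (\<lambda>p. kl (p div e) * 1 + 1 * hl (p mod e)) * madj (kron Vb W))
      = (kron Vb W * diag_matrix (a*e) (\<lambda>p. kl (p div e) * 1 + 1 * hl (p mod e)) * madj (kron Vb W)) * U"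
  proof (rule commute_kron_conj_diag_fun[OF Vb W U comm[unfolded G], of "\<lambda>i k. kl i * 1 + 1 * hl k"])
    fix i k i' k' assume ik: "i < a" "k < e" "i' < a" "k' < e"
      and "complex_of_real (b i) * complex_of_real (exp (- \<beta> * lam k) / Z)
         = complex_of_real (b i') * complex_of_real (exp (- \<beta> * lam k') / Z)"
    then have eq: "b i * (exp (- \<beta> * lam k) / Z) = b i' * (exp (- \<beta> * lam k') / Z)"
      by (simp only: of_real_mult[symmetric] of_real_eq_iff)
    have "kl i * 1 + 1 * hl k = complex_of_real (- (ln (b i * (exp (- \<beta> * lam k) / Z)) + ln Z) / \<beta>)"
      unfolding kl_def hl_def log[OF ik(1), symmetric] by simp
    also have "\<dots> = kl i' * 1 + 1 * hl k'"
      unfolding eq kl_def hl_def log[OF ik(3), symmetric] by simp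
    finally show "kl i * 1 + 1 * hl k = kl i' * 1 + 1 * hl k'" .
  qed
  moreover have "kron Vb W * diag_matrix (a*e) (\<lambda>p. kl (p div e) * 1) * madj (kron Vb W) = kron K (1\<^sub>m e)"
    using kron_conj_diag[OF unitaryD(1)[OF Vb] unitaryD(1)[OF W], of kl "\<lambda>_. 1"] conj_diag_one[OF W]
    unfolding K_def kl_def by simp
  moreover have "kron Vb W * diag_matrix (a*e) (\<lambda>p. 1 * hl (p mod e)) * madj (kron Vb W) = kron (1\<^sub>m a) H"
    using kron_conj_diag[OF unitaryD(1)[OF Vb] unitaryD(1)[OF W], of "\<lambda>_. 1" hl] conj_diag_one[OF Vb]
    unfolding HW hl_def by simp
  ultimately show ?thesis
    unfolding conj_diag_add[OF unitaryD(1)[OF unitary_kron[OF Vb W]], symmetric] by simp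
qed

section \<open>Primitive channels have only faithful invariant states\<close>

lemma state_eigenvalues_nonneg:
  assumes st: "is_state d B" and V: "unitary d V"
    and B: "B = V * diag_matrix d (\<lambda>i. complex_of_real (b i)) * madj V" and i: "i < d"
  shows "b i \<ge> 0"
proof -
  note v = unitaryD[OF V]
  define w where "w = col V i"
  have w: "w \<in> carrier_vec d" unfolding w_def using v(1) by (intro carrier_vecI) simp
  have Bc: "B \<in> carrier_mat d d" using st unfolding is_state_def self_adjoint_def by simp
  have "0 \<le> Re (\<Sum>k<d. cnj (w $ k) * ((B *\<^sub>v w) $ k))" using st w unfolding is_state_def by blast
  also have "(\<Sum>k<d. cnj (w $ k) * ((B *\<^sub>v w) $ k)) = (\<Sum>k<d. \<Sum>l<d. cnj (V $$ (k,i)) * B $$ (k,l) * V $$ (l,i))"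
    unfolding w_def using v Bc i by (simp add: scalar_prod_def atLeast0LessThan sum_distrib_left mult.assoc)
  also have "\<dots> = (madj V * B * V) $$ (i,i)"
    using v Bc i by (simp add: sum_distrib_right) (subst sum.swap, simp)
  also have "madj V * B * V = diag_matrix d (\<lambda>i. complex_of_real (b i))"
    unfolding B by (rule unitary_conj_cancel[OF V diag_matrix_carrier])
  finally show ?thesis using i by simp
qed

lemma state_eigenvalue_nonzero:
  assumes st: "is_state d B" and V: "unitary d V"
    and B: "B = V * diag_matrix d (\<lambda>i. complex_of_real (b i)) * madj V"
  obtains i where "i < d" "b i \<noteq> 0"
proof -
  have "complex_of_real (\<Sum>i<d. b i) = mtrace B" unfolding B conj_diag_trace[OF V] by (simp only: of_real_sum)
  also have "\<dots> = 1" using st unfolding is_state_def by simp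
  finally have "(\<Sum>i<d. b i) \<noteq> 0" by (simp only: of_real_eq_1_iff)
  then show ?thesis using that by (meson lessThan_iff sum.neutral)
qed

lemma trace_conj_real_diag:
  assumes C: "C \<in> carrier_mat d d"
  shows "mtrace (C * diag_matrix d (\<lambda>i. complex_of_real (b i)) * madj C)
       = complex_of_real (\<Sum>r<d. \<Sum>k<d. b k * (cmod (C $$ (r,k)))\<^sup>2)"
proof -
  have entry: "z * complex_of_real x * cnj z = complex_of_real (x * (cmod z)\<^sup>2)" for z x
    by (simp only: of_real_mult complex_norm_square mult_ac)
  have "mtrace (C * diag_matrix d (\<lambda>i. complex_of_real (b i)) * madj C)
      = (\<Sum>r<d. \<Sum>k<d. C $$ (r,k) * complex_of_real (b k) * cnj (C $$ (r,k)))"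
    unfolding mtrace_def using C by (simp add: conj_diag_index del: index_mult_mat_sum)
  then show ?thesis by (simp only: entry of_real_sum)
qed

definition kraus_sum :: "nat \<Rightarrow> complex mat list \<Rightarrow> complex mat \<Rightarrow> complex mat" where
  "kraus_sum d Ks \<rho> = foldr (\<lambda>K B. K * \<rho> * madj K + B) Ks (0\<^sub>m d d)"

lemma kraus_sum_carrier:
  "set Ks \<subseteq> carrier_mat d d \<Longrightarrow> \<rho> \<in> carrier_mat d d \<Longrightarrow> kraus_sum d Ks \<rho> \<in> carrier_mat d d"
  unfolding kraus_sum_def by (induction Ks) auto

lemma trace_compress_kraus_sum:
  assumes "set Ks \<subseteq> carrier_mat d d" "\<rho> \<in> carrier_mat d d" "P \<in> carrier_mat d d"
  shows "mtrace (P * kraus_sum d Ks \<rho> * P) = (\<Sum>K\<leftarrow>Ks. mtrace (P * (K * \<rho> * madj K) * P))"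
  using assms
proof (induction Ks)
  case Nil
  then show ?case by (simp add: kraus_sum_def)
next
  case (Cons K Ks)
  have X: "K * \<rho> * madj K \<in> carrier_mat d d" using Cons by simp
  have R: "kraus_sum d Ks \<rho> \<in> carrier_mat d d" using Cons kraus_sum_carrier by auto
  have "P * kraus_sum d (K # Ks) \<rho> * P = P * (K * \<rho> * madj K) * P + P * kraus_sum d Ks \<rho> * P"
    unfolding kraus_sum_def using X R Cons(4) unfolding kraus_sum_def
    by (simp add: mult_add_distrib_mat[of _ d d _ d] add_mult_distrib_mat[of _ d d _ _ d] del: assoc_mult_mat)
  then show ?case using Cons X R by (simp add: mtrace_add[of _ d] del: assoc_mult_mat)
qed

text \<open>The terms P K B K* P of the vanishing sum are positive semidefinite, so each vanishes,
  which forces P K V e_k = 0 for every eigenvector V e_k of B with b k \<noteq> 0.\<close>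

lemma kraus_ops_vanish_on_support:
  assumes Ks: "set Ks \<subseteq> carrier_mat d d" and K: "K \<in> set Ks"
    and V: "unitary d V" and b: "\<And>i. i < d \<Longrightarrow> b i \<ge> 0"
    and P: "P \<in> carrier_mat d d" "madj P = P"
    and zero: "P * kraus_sum d Ks (V * diag_matrix d (\<lambda>i. complex_of_real (b i)) * madj V) * P = 0\<^sub>m d d"
    and r: "r < d" and k: "k < d" and bk: "b k \<noteq> 0"
  shows "(P * K * V) $$ (r,k) = 0"
proof -
  note v = unitaryD[OF V]
  define B where "B = V * diag_matrix d (\<lambda>i. complex_of_real (b i)) * madj V"
  define t where "t K = (\<Sum>r<d. \<Sum>k<d. b k * (cmod ((P * K * V) $$ (r,k)))\<^sup>2)" for K
  have tK: "mtrace (P * (K * B * madj K) * P) = complex_of_real (t K)" if "K \<in> set Ks" for K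
  proof -
    have K: "K \<in> carrier_mat d d" using Ks that by auto
    have "P * (K * B * madj K) * P = (P * K * V) * diag_matrix d (\<lambda>i. complex_of_real (b i)) * madj (P * K * V)"
      unfolding B_def using P K v by (simp add: madj_mult[of _ d d _ d] assoc_mult_mat[of _ d d _ d _ d])
    then show ?thesis unfolding t_def using trace_conj_real_diag[of "P * K * V" d b] P K v by simp
  qed
  have "(\<Sum>K\<leftarrow>Ks. mtrace (P * (K * B * madj K) * P)) = 0"
    using trace_compress_kraus_sum[OF Ks _ P(1), of B] zero v unfolding B_def by simp
  then have "complex_of_real (\<Sum>K\<leftarrow>Ks. t K) = 0"
    using tK by (simp add: sum_list_of_real[symmetric] o_def cong: map_cong)
  moreover have t_nonneg: "0 \<le> t K" for K unfolding t_def using b by (intro sum_nonneg) auto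
  ultimately have "t K = 0" using K sum_list_nonneg_eq_0_iff[of "map t Ks"] by auto
  then have "(\<Sum>k<d. b k * (cmod ((P * K * V) $$ (r,k)))\<^sup>2) = 0"
    unfolding t_def using b r by (subst (asm) sum_nonneg_eq_0_iff) (auto intro!: sum_nonneg)
  then have "b k * (cmod ((P * K * V) $$ (r,k)))\<^sup>2 = 0"
    using b k by (subst (asm) sum_nonneg_eq_0_iff) auto
  then show ?thesis using bk by simp
qed

text \<open>For idempotent P, P A = P A P says that A maps ker P into itself.\<close>

definition ker_invariant :: "nat \<Rightarrow> complex mat \<Rightarrow> complex mat \<Rightarrow> bool" where
  "ker_invariant d P A \<longleftrightarrow> A \<in> carrier_mat d d \<and> P * A = P * A * P"

lemma ker_invariant_mult:
  assumes P: "P \<in> carrier_mat d d" and A: "ker_invariant d P A" and B: "ker_invariant d P B"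
  shows "ker_invariant d P (A * B)"
proof -
  have a: "A \<in> carrier_mat d d" "P * A = P * A * P" using A unfolding ker_invariant_def by auto
  have b: "B \<in> carrier_mat d d" "P * B = P * B * P" using B unfolding ker_invariant_def by auto
  note assoc = assoc_mult_mat[of _ d d _ d _ d]
  have "P * (A * B) = P * A * B" using P a(1) b(1) by (simp add: assoc)
  also have "\<dots> = P * A * P * B" by (metis a(2))
  also have "\<dots> = P * A * (P * B)" using P a(1) b(1) by (simp add: assoc)
  also have "\<dots> = P * A * (P * B * P)" by (metis b(2))
  also have "\<dots> = P * A * P * B * P" using P a(1) b(1) by (simp add: assoc)
  also have "\<dots> = P * A * B * P" by (metis a(2))
  also have "\<dots> = P * (A * B) * P" using P a(1) b(1) by (simp add: assoc)
  finally show ?thesis using a b unfolding ker_invariant_def by simp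
qed

lemma ker_invariant_add:
  assumes P: "P \<in> carrier_mat d d" and A: "ker_invariant d P A" and B: "ker_invariant d P B"
  shows "ker_invariant d P (A + B)"
proof -
  have a: "A \<in> carrier_mat d d" "P * A = P * A * P" using A unfolding ker_invariant_def by auto
  have b: "B \<in> carrier_mat d d" "P * B = P * B * P" using B unfolding ker_invariant_def by auto
  have "P * (A + B) = P * A + P * B" using P a(1) b(1) by (simp add: mult_add_distrib_mat[of _ d d _ d])
  also have "\<dots> = P * A * P + P * B * P" by (metis a(2) b(2))
  also have "\<dots> = P * (A + B) * P"
    using P a(1) b(1) by (simp add: mult_add_distrib_mat[of _ d d _ d] add_mult_distrib_mat[of _ d d _ _ d])
  finally show ?thesis using a b unfolding ker_invariant_def by simp
qed

lemma ker_invariant_smult: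
  assumes P: "P \<in> carrier_mat d d" and A: "ker_invariant d P A"
  shows "ker_invariant d P (x \<cdot>\<^sub>m A)"
proof -
  have a: "A \<in> carrier_mat d d" "P * A = P * A * P" using A unfolding ker_invariant_def by auto
  have "P * (x \<cdot>\<^sub>m A) = x \<cdot>\<^sub>m (P * A)" using P a(1) by (simp add: mult_smult_distrib[of _ d d _ d])
  also have "\<dots> = x \<cdot>\<^sub>m (P * A * P)" by (metis a(2))
  also have "\<dots> = P * (x \<cdot>\<^sub>m A) * P"
    using P a(1) by (simp add: mult_smult_distrib[of _ d d _ d] mult_smult_assoc_mat[of _ d d _ d])
  finally show ?thesis using a unfolding ker_invariant_def by simp
qed

lemma ker_invariant_products:
  assumes P: "P \<in> carrier_mat d d" "P * P = P" and K: "\<And>K. K \<in> set Ks \<Longrightarrow> ker_invariant d P K"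
    and ws: "set ws \<subseteq> set Ks"
  shows "ker_invariant d P (foldr (\<lambda>A B. A * B) ws (1\<^sub>m d))"
  using ws
proof (induction ws)
  case Nil
  then show ?case using P unfolding ker_invariant_def by simp
next
  case (Cons w ws)
  then show ?case using ker_invariant_mult[OF P(1) K] by simp
qed

lemma ker_invariant_span:
  assumes P: "P \<in> carrier_mat d d" and S: "\<And>A. A \<in> S \<Longrightarrow> ker_invariant d P A"
    and X: "in_span d S X"
  shows "ker_invariant d P X"
proof -
  obtain cs where cs: "set (map snd cs) \<subseteq> S" and X: "X = foldr (\<lambda>(c,A) B. c \<cdot>\<^sub>m A + B) cs (0\<^sub>m d d)"
    using X unfolding in_span_def by blast
  have "ker_invariant d P (foldr (\<lambda>(c,A) B. c \<cdot>\<^sub>m A + B) cs (0\<^sub>m d d))" using cs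
  proof (induction cs)
    case Nil
    then show ?case using P unfolding ker_invariant_def by simp
  next
    case (Cons ca cs)
    obtain c A where ca: "ca = (c, A)" by force
    have "ker_invariant d P A" using Cons.prems ca S by auto
    then show ?case using Cons ca ker_invariant_add[OF P ker_invariant_smult[OF P]] by simp
  qed
  then show ?thesis using X by simp
qed

lemma ker_invariant_of_vanishing_columns:
  assumes V: "unitary d V" and K: "K \<in> carrier_mat d d" and c: "\<And>i. c i * c i = c i"
    and P: "P = V * diag_matrix d c * madj V"
    and zero: "\<And>r k. r < d \<Longrightarrow> k < d \<Longrightarrow> c k \<noteq> 1 \<Longrightarrow> (P * K * V) $$ (r,k) = 0"
  shows "ker_invariant d P K"
proof -
  note v = unitaryD[OF V]
  define R where "R = V * diag_matrix d (\<lambda>i. 1 - c i) * madj V"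
  have Pc: "P \<in> carrier_mat d d" and Rc: "R \<in> carrier_mat d d" unfolding P R_def using v by simp_all
  have PR: "P + R = 1\<^sub>m d" unfolding P R_def conj_diag_add[OF v(1)] using conj_diag_one[OF V] by simp
  have PKV: "P * K * V \<in> carrier_mat d d" using Pc K v by simp
  have "P * K * R = (P * K * V) * diag_matrix d (\<lambda>i. 1 - c i) * madj V"
    unfolding R_def using Pc K v by (simp add: assoc_mult_mat[of _ d d _ d _ d])
  also have "\<dots> = 0\<^sub>m d d"
  proof (rule eq_matI)
    fix r j assume "r < dim_row (0\<^sub>m d d)" "j < dim_col (0\<^sub>m d d)"
    then have r: "r < d" and j: "j < d" by auto
    have "((P * K * V) * diag_matrix d (\<lambda>i. 1 - c i) * madj V) $$ (r,j)
        = (\<Sum>k<d. (P * K * V) $$ (r,k) * (1 - c k) * cnj (V $$ (j,k)))"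
      using conj_diag_index[OF PKV v(1) r j] .
    also have "\<dots> = 0" using zero r by (intro sum.neutral) auto
    finally show "((P * K * V) * diag_matrix d (\<lambda>i. 1 - c i) * madj V) $$ (r,j) = 0\<^sub>m d d $$ (r,j)"
      using r j by simp
  qed (use v Pc K in auto)
  finally have PKR: "P * K * R = 0\<^sub>m d d" .
  have "P * K = P * K * (P + R)" unfolding PR using Pc K by simp
  also have "\<dots> = P * K * P"
    using PKR Pc K Rc by (simp add: mult_add_distrib_mat[of _ d d _ d] del: assoc_mult_mat)
  finally show ?thesis using K unfolding ker_invariant_def by simp
qed

text \<open>V e(i0,i1) V* maps the vector V e_i1 of ker P to V e_i0, which is not in ker P.\<close>

lemma ker_invariant_all_imp_trivial:
  assumes V: "unitary d V" and P: "P = V * diag_matrix d c * madj V"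
    and all: "\<And>X. X \<in> carrier_mat d d \<Longrightarrow> ker_invariant d P X"
    and i0: "i0 < d" "c i0 = 1" and i1: "i1 < d" "c i1 = 0"
  shows False
proof -
  note v = unitaryD[OF V]
  have Pc: "P \<in> carrier_mat d d" unfolding P using v by simp
  define E where "E = mat d d (\<lambda>(p,q). if p = i0 \<and> q = i1 then 1 else 0 :: complex)"
  have Ec: "E \<in> carrier_mat d d" unfolding E_def by simp
  define X where "X = V * E * madj V"
  have Xc: "X \<in> carrier_mat d d" unfolding X_def using v Ec by simp
  have "P * X = P * X * P" using all[OF Xc] unfolding ker_invariant_def by simp
  then have "madj V * (P * X) * V = madj V * (P * X * P) * V" by simp
  then have "(madj V * P * V) * (madj V * X * V) = ((madj V * P * V) * (madj V * X * V)) * (madj V * P * V)"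
    by (simp only: unitary_conj_mult[OF V Pc Xc] unitary_conj_mult[OF V mult_carrier_sq[OF Pc Xc] Pc])
  then have eq: "diag_matrix d c * E = diag_matrix d c * E * diag_matrix d c"
    unfolding P X_def unitary_conj_cancel[OF V diag_matrix_carrier] unitary_conj_cancel[OF V Ec] .
  have "(diag_matrix d c * E) $$ (i0,i1) = 1"
    using Ec i0 i1 unfolding E_def by (simp add: index_diag_matrix_mult del: index_mult_mat_sum)
  moreover have "(diag_matrix d c * E * diag_matrix d c) $$ (i0,i1) = 0"
    using Ec i0 i1 mult_carrier_sq[OF diag_matrix_carrier Ec]
    by (simp add: index_mult_diag_matrix del: index_mult_mat_sum)
  ultimately show False using eq by simp
qed

text \<open>If B had a kernel, with projection P, all Kraus operators of L would leave ker P invariant,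
  hence so would their products, which span all matrices by primitivity.\<close>

theorem primitive_state_faithful:
  assumes prim: "primitive d L" and st: "is_state d B" and V: "unitary d V"
    and B: "B = V * diag_matrix d (\<lambda>i. complex_of_real (b i)) * madj V"
    and P: "P = V * diag_matrix d (\<lambda>i. if b i = 0 then 1 else 0) * madj V"
    and pres: "\<And>Y. Y \<in> carrier_mat d d \<Longrightarrow> Y * P = 0\<^sub>m d d \<Longrightarrow> L Y * P = 0\<^sub>m d d"
    and i: "i < d"
  shows "b i \<noteq> 0"
proof
  assume i0: "b i = 0"
  note v = unitaryD[OF V]
  define c where "c i = (if b i = 0 then 1 else 0 :: complex)" for i
  have P_c: "P = V * diag_matrix d c * madj V" unfolding P c_def ..
  have cc: "(\<lambda>i. cnj (c i)) = c" "(\<lambda>i. c i * c i) = c" unfolding c_def by auto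
  have Pc: "P \<in> carrier_mat d d" unfolding P using v by simp
  have Padj: "madj P = P" and PP: "P * P = P"
    unfolding P_c conj_diag_madj[OF v(1)] conj_diag_mult[OF V] cc by simp_all
  have b: "\<And>i. i < d \<Longrightarrow> b i \<ge> 0" using state_eigenvalues_nonneg[OF st V B] .
  obtain i1 where i1: "i1 < d" "b i1 \<noteq> 0" using state_eigenvalue_nonzero[OF st V B] .
  have Bc: "B \<in> carrier_mat d d" unfolding B using v by simp
  have BP: "B * P = V * diag_matrix d (\<lambda>_. 0) * madj V"
    unfolding B P conj_diag_mult[OF V] by (rule arg_cong[where f="\<lambda>f. V * diag_matrix d f * madj V"]) auto
  obtain Ks n0 where kr: "kraus_rep d L Ks" and span: "\<And>X. X \<in> carrier_mat d d \<Longrightarrow>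
      in_span d {foldr (\<lambda>A B. A * B) ws (1\<^sub>m d) | ws. length ws = n0 \<and> set ws \<subseteq> set Ks} X"
    using prim unfolding primitive_def by blast
  have Ks: "set Ks \<subseteq> carrier_mat d d" and LK: "L B = kraus_sum d Ks B"
    using kr Bc unfolding kraus_rep_def kraus_sum_def by auto
  then have LBc: "L B \<in> carrier_mat d d" using kraus_sum_carrier[OF Ks Bc] by simp
  have "L B * P = 0\<^sub>m d d" using pres[OF Bc] BP conj_diag_zero[OF v(1)] by simp
  then have LB: "P * L B * P = 0\<^sub>m d d" using Pc LBc by (simp add: assoc_mult_mat[of _ d d _ d _ d])
  have inv: "ker_invariant d P K" if K: "K \<in> set Ks" for K
    using K Ks by (intro ker_invariant_of_vanishing_columns[OF V _ _ P]
        kraus_ops_vanish_on_support[OF Ks K V b Pc Padj LB[unfolded LK, unfolded B]]) auto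
  have "ker_invariant d P X" if "X \<in> carrier_mat d d" for X
    using ker_invariant_products[OF Pc PP inv] by (intro ker_invariant_span[OF Pc _ span[OF that]]) blast
  then show False using ker_invariant_all_imp_trivial[OF V P_c _ i _ i1(1)] i0 i1(2) unfolding c_def by auto
qed

lemma ptrace2_conj_kron_mult_zero:
  assumes U: "unitary (a*e) U" and P: "P \<in> carrier_mat a a" and \<sigma>: "\<sigma> \<in> carrier_mat e e"
    and Y: "Y \<in> carrier_mat a a" and YP: "Y * P = 0\<^sub>m a a"
    and c: "U * kron P (1\<^sub>m e) = kron P (1\<^sub>m e) * U"
  shows "ptrace2 a e (U * kron Y \<sigma> * madj U) * P = 0\<^sub>m a a"
proof -
  note u = unitaryD[OF U]
  define N where "N = a * e"
  note AS = assoc_mult_mat[of _ N N _ N _ N]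
  have Pt: "kron P (1\<^sub>m e) \<in> carrier_mat N N" unfolding N_def using P by simp
  have Yt: "kron Y \<sigma> \<in> carrier_mat N N" unfolding N_def using Y \<sigma> by simp
  have uN: "U \<in> carrier_mat N N" "madj U \<in> carrier_mat N N" using u unfolding N_def by auto
  have ca: "madj U * kron P (1\<^sub>m e) = kron P (1\<^sub>m e) * madj U"
    by (rule commute_madj[OF U Pt[unfolded N_def] c])
  have Z: "U * kron Y \<sigma> * madj U \<in> carrier_mat (a*e) (a*e)" using uN Yt unfolding N_def by simp
  have "ptrace2 a e (U * kron Y \<sigma> * madj U) * P = ptrace2 a e (U * kron Y \<sigma> * madj U * kron P (1\<^sub>m e))"
    by (rule ptrace2_mult_right[OF Z P, symmetric])
  also have "U * kron Y \<sigma> * madj U * kron P (1\<^sub>m e) = U * (kron Y \<sigma> * (madj U * kron P (1\<^sub>m e)))"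
    using uN Yt Pt by (simp add: AS)
  also have "\<dots> = U * ((kron Y \<sigma> * kron P (1\<^sub>m e)) * madj U)"
    unfolding ca using uN Yt Pt by (simp add: AS)
  also have "kron Y \<sigma> * kron P (1\<^sub>m e) = kron (Y * P) (\<sigma> * 1\<^sub>m e)"
    by (rule kron_mult[OF Y P \<sigma> one_carrier_mat])
  also have "\<dots> = 0\<^sub>m N N" unfolding YP N_def using \<sigma> by (simp add: kron_zero_left)
  also have "U * (0\<^sub>m N N * madj U) = 0\<^sub>m (a*e) (a*e)" using uN unfolding N_def by simp
  finally show ?thesis by (simp add: ptrace2_zero)
qed

lemma trace_ptrace2_dual:
  assumes U: "U \<in> carrier_mat (a*e) (a*e)" and \<sigma>: "\<sigma> \<in> carrier_mat e e"
    and R: "R \<in> carrier_mat a a" and X: "X \<in> carrier_mat a a"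
  shows "mtrace (R * ptrace2 a e (kron (1\<^sub>m a) \<sigma> * (madj U * kron X (1\<^sub>m e) * U)))
       = mtrace (ptrace2 a e (U * kron R \<sigma> * madj U) * X)"
proof -
  define N where "N = a * e"
  note AS = assoc_mult_mat[of _ N N _ N _ N]
  have c: "U \<in> carrier_mat N N" "madj U \<in> carrier_mat N N" "kron X (1\<^sub>m e) \<in> carrier_mat N N"
    "kron (1\<^sub>m a) \<sigma> \<in> carrier_mat N N" "kron R \<sigma> \<in> carrier_mat N N" "kron R (1\<^sub>m e) \<in> carrier_mat N N"
    using U \<sigma> R X unfolding N_def by auto
  have kk: "kron R (1\<^sub>m e) * kron (1\<^sub>m a) \<sigma> = kron R \<sigma>"
    using kron_mult[OF R one_carrier_mat one_carrier_mat \<sigma>] R \<sigma> by simp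
  have W1: "kron (1\<^sub>m a) \<sigma> * (madj U * kron X (1\<^sub>m e) * U) \<in> carrier_mat (a*e) (a*e)" using c unfolding N_def by simp
  have W2: "U * kron R \<sigma> * madj U \<in> carrier_mat (a*e) (a*e)" using c unfolding N_def by simp
  have "mtrace (R * ptrace2 a e (kron (1\<^sub>m a) \<sigma> * (madj U * kron X (1\<^sub>m e) * U)))
      = mtrace (kron R (1\<^sub>m e) * (kron (1\<^sub>m a) \<sigma> * (madj U * kron X (1\<^sub>m e) * U)))"
    by (rule mtrace_ptrace2_left[OF W1 R])
  also have "\<dots> = mtrace ((kron R (1\<^sub>m e) * kron (1\<^sub>m a) \<sigma>) * (madj U * (kron X (1\<^sub>m e) * U)))"
    using c by (simp add: AS)
  also have "\<dots> = mtrace (kron R \<sigma> * (madj U * (kron X (1\<^sub>m e) * U)))" unfolding kk ..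
  also have "\<dots> = mtrace (U * (kron R \<sigma> * (madj U * kron X (1\<^sub>m e))))"
  proof -
    have "mtrace ((kron R \<sigma> * (madj U * kron X (1\<^sub>m e))) * U) = mtrace (U * (kron R \<sigma> * (madj U * kron X (1\<^sub>m e))))"
      by (rule mtrace_mult_comm[of _ N N]) (use c in simp)+
    then show ?thesis using c by (simp add: AS)
  qed
  also have "\<dots> = mtrace (U * kron R \<sigma> * madj U * kron X (1\<^sub>m e))" using c by (simp add: AS)
  also have "\<dots> = mtrace (ptrace2 a e (U * kron R \<sigma> * madj U) * X)"
    by (rule mtrace_ptrace2_right[OF W2 X, symmetric])
  finally show ?thesis .
qed

lemma unitary_conj_exchange:
  assumes U: "unitary n U" and A: "A \<in> carrier_mat n n" and B: "B \<in> carrier_mat n n"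
    and c: "U * (A + B) = (A + B) * U"
  shows "madj U * B * U - B = A - madj U * A * U"
proof -
  note u = unitaryD[OF U]
  have "madj U * A * U + madj U * B * U = madj U * ((A + B) * U)"
    using u A B by (simp add: mult_add_distrib_mat[of _ n n _ n] add_mult_distrib_mat[of _ n n _ _ n]
        assoc_mult_mat[of _ n n _ n _ n])
  also have "\<dots> = A + B"
    unfolding c[symmetric] by (rule mult_left_inverse_cancel[OF u(2) u(1) add_carrier_mat[OF B] u(3)])
  finally have sum: "madj U * A * U + madj U * B * U = A + B" .
  show ?thesis
  proof (rule eq_matI)
    fix i j assume "i < dim_row (A - madj U * A * U)" "j < dim_col (A - madj U * A * U)"
    then have i: "i < n" and j: "j < n" using A u(1) by auto
    have "(madj U * A * U) $$ (i,j) + (madj U * B * U) $$ (i,j) = A $$ (i,j) + B $$ (i,j)"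
      using arg_cong[OF sum, of "\<lambda>X. X $$ (i,j)"] u(1) A B i j by (simp del: index_mult_mat_sum assoc_mult_mat)
    then show "(madj U * B * U - B) $$ (i,j) = (A - madj U * A * U) $$ (i,j)"
      using u(1) A B i j by (simp del: index_mult_mat_sum assoc_mult_mat add: algebra_simps)
  qed (use u A B in auto)
qed

text \<open>Energy balance of one interaction: if U conserves K \<otimes> 1 + 1 \<otimes> H, the energy the
  environment in state sigma loses equals the Heisenberg-picture gain of K.\<close>

lemma ptrace2_energy_exchange:
  assumes U: "unitary (a*e) U" and K: "K \<in> carrier_mat a a" and H: "H \<in> carrier_mat e e"
    and \<sigma>: "\<sigma> \<in> carrier_mat e e" and tr: "mtrace \<sigma> = 1"
    and c: "U * (kron K (1\<^sub>m e) + kron (1\<^sub>m a) H) = (kron K (1\<^sub>m e) + kron (1\<^sub>m a) H) * U"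
  shows "ptrace2 a e (kron (1\<^sub>m a) \<sigma> * (madj U * kron (1\<^sub>m a) H * U - kron (1\<^sub>m a) H))
    = K - ptrace2 a e (kron (1\<^sub>m a) \<sigma> * (madj U * kron K (1\<^sub>m e) * U))"
proof -
  note u = unitaryD[OF U]
  define N where "N = a * e"
  define Kt where "Kt = kron K (1\<^sub>m e)"
  define S where "S = kron (1\<^sub>m a) \<sigma>"
  have car: "Kt \<in> carrier_mat N N" "kron (1\<^sub>m a) H \<in> carrier_mat N N" "S \<in> carrier_mat N N"
    using K H \<sigma> unfolding N_def Kt_def S_def by auto
  have N: "U \<in> carrier_mat N N" "madj U \<in> carrier_mat N N" using u unfolding N_def by auto
  have "ptrace2 a e (S * (madj U * kron (1\<^sub>m a) H * U - kron (1\<^sub>m a) H))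
      = ptrace2 a e (S * Kt - S * (madj U * Kt * U))"
    unfolding unitary_conj_exchange[OF U car(1,2)[unfolded N_def] c[folded Kt_def]]
    using car N by (simp add: mult_minus_distrib_mat[of _ N N _ N] del: assoc_mult_mat)
  also have "\<dots> = ptrace2 a e (S * Kt) - ptrace2 a e (S * (madj U * Kt * U))"
    by (rule ptrace2_minus) (use car N in \<open>simp_all add: N_def\<close>)
  also have "S * Kt = kron K \<sigma>"
    unfolding S_def Kt_def using kron_mult[OF one_carrier_mat K \<sigma> one_carrier_mat] K \<sigma> by simp
  also have "ptrace2 a e (kron K \<sigma>) = K"
  proof -
    have "1 \<cdot>\<^sub>m K = K" by (intro eq_matI) auto
    then show ?thesis using ptrace2_kron[OF K \<sigma>] tr by simp
  qed
  finally show ?thesis unfolding S_def Kt_def .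
qed

section \<open>The repeated interaction system\<close>

locale repeated_interaction =
  fixes M dS :: nat and dE :: "nat \<Rightarrow> nat" and HS :: "complex mat" and HE V :: "nat \<Rightarrow> complex mat"
    and \<tau> :: "nat \<Rightarrow> real"
  assumes dE_pos: "\<And>j. j < M \<Longrightarrow> dE j > 0"
    and HS: "self_adjoint dS HS"
    and HE: "\<And>j. j < M \<Longrightarrow> self_adjoint (dE j) (HE j)"
    and V: "\<And>j. j < M \<Longrightarrow> self_adjoint (dS * dE j) (V j)"
begin

abbreviation U :: "nat \<Rightarrow> complex mat" where
  "U \<equiv> Uop dS dE HS HE V \<tau>"

lemma unitary_U: "j < M \<Longrightarrow> unitary (dS * dE j) (U j)"
  unfolding Uop_def by (intro unitary_mexp self_adjoint_add self_adjoint_kron HS self_adjoint_one HE V)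

lemma Lj_carrier: "Lj dS dE HS HE V \<tau> \<beta> \<zeta> j \<rho> \<in> carrier_mat dS dS"
  unfolding Lj_def Let_def by simp

lemma Ljdual_carrier: "Ljdual dS dE HS HE V \<tau> \<beta> \<zeta> j X \<in> carrier_mat dS dS"
  unfolding Ljdual_def Let_def by simp

lemma rhoE_carrier: "j < M \<Longrightarrow> rhoE HE \<beta> \<zeta> j \<in> carrier_mat (dE j) (dE j)"
  unfolding rhoE_def by (rule gibbs_carrier[OF HE])

lemma trace_Ljdual:
  assumes j: "j < M" and R: "R \<in> carrier_mat dS dS" and X: "X \<in> carrier_mat dS dS"
  shows "mtrace (R * Ljdual dS dE HS HE V \<tau> \<beta> \<zeta> j X) = mtrace (Lj dS dE HS HE V \<tau> \<beta> \<zeta> j R * X)"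
  unfolding Ljdual_def Lj_def Let_def
  by (rule trace_ptrace2_dual[OF unitaryD(1)[OF unitary_U[OF j]] rhoE_carrier[OF j] R X])

lemma trace_foldr_Ljdual:
  assumes "k \<le> M" and R: "R \<in> carrier_mat dS dS" and "X \<in> carrier_mat dS dS"
  shows "mtrace (R * foldr (Ljdual dS dE HS HE V \<tau> \<beta> \<zeta>) [0..<k] X)
       = mtrace (fold (Lj dS dE HS HE V \<tau> \<beta> \<zeta>) [0..<k] R * X)"
  using assms(1,3)
proof (induction k arbitrary: X)
  case (Suc k)
  have "fold (Lj dS dE HS HE V \<tau> \<beta> \<zeta>) [0..<k] R \<in> carrier_mat dS dS"
    using R by (cases k) (simp_all add: Lj_carrier)
  then show ?case
    using Suc.IH[OF _ Ljdual_carrier] Suc.prems trace_Ljdual[of k _ X] by simp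
qed simp

lemma Lsharp_left_ideal:
  assumes P: "P \<in> carrier_mat dS dS"
    and comm: "\<And>j. j < M \<Longrightarrow> U j * kron P (1\<^sub>m (dE j)) = kron P (1\<^sub>m (dE j)) * U j"
    and Y: "Y \<in> carrier_mat dS dS" "Y * P = 0\<^sub>m dS dS"
  shows "Lsharp s M dS dE HS HE V \<tau> \<beta> \<zeta> Y * P = 0\<^sub>m dS dS"
proof -
  have L: "Lj dS dE HS HE V \<tau> \<beta> \<zeta> j Y * P = 0\<^sub>m dS dS"
    if "j < M" "Y \<in> carrier_mat dS dS" "Y * P = 0\<^sub>m dS dS" for j Y
    unfolding Lj_def Let_def
    by (rule ptrace2_conj_kron_mult_zero[OF unitary_U P rhoE_carrier that(2,3) comm]) (use that in simp_all)
  have fold: "fold (Lj dS dE HS HE V \<tau> \<beta> \<zeta>) [0..<k] Y * P = 0\<^sub>m dS dS" if "k \<le> M" for k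
    using that
  proof (induction k)
    case (Suc k)
    have "fold (Lj dS dE HS HE V \<tau> \<beta> \<zeta>) [0..<k] Y \<in> carrier_mat dS dS"
      using Y by (cases k) (simp_all add: Lj_carrier)
    then show ?case using Suc L by simp
  qed (use Y in simp)
  have "foldr (\<lambda>j A. Lj dS dE HS HE V \<tau> \<beta> \<zeta> j Y + A) [0..<M] (0\<^sub>m dS dS) * P
      = foldr (\<lambda>j A. Lj dS dE HS HE V \<tau> \<beta> \<zeta> j Y * P + A) [0..<M] (0\<^sub>m dS dS)"
    by (rule foldr_add_mult[OF Lj_carrier P])
  also have "\<dots> = 0\<^sub>m dS dS" using L Y by (intro foldr_add_zero) auto
  finally have "foldr (\<lambda>j A. Lj dS dE HS HE V \<tau> \<beta> \<zeta> j Y + A) [0..<M] (0\<^sub>m dS dS) * P = 0\<^sub>m dS dS" .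
  moreover have "foldr (\<lambda>j A. Lj dS dE HS HE V \<tau> \<beta> \<zeta> j Y + A) [0..<M] (0\<^sub>m dS dS) \<in> carrier_mat dS dS"
    by (rule foldr_add_carrier) (rule Lj_carrier)
  ultimately show ?thesis
    using fold[of M] P by (cases s) (simp_all add: Lsharp_def mult_smult_assoc_mat[of _ dS dS _ dS])
qed

definition conserved :: "complex mat \<Rightarrow> bool" where
  "conserved K \<longleftrightarrow> K \<in> carrier_mat dS dS \<and> (\<forall>j<M.
     U j * (kron K (1\<^sub>m (dE j)) + kron (1\<^sub>m dS) (HE j)) = (kron K (1\<^sub>m (dE j)) + kron (1\<^sub>m dS) (HE j)) * U j)"

lemma Phi_conserved:
  assumes K: "conserved K" and j: "j < M"
  shows "Phi M dS dE HS HE V \<tau> \<beta> \<zeta> j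
       = (- 1 / complex_of_real (\<Sum>k<M. \<tau> k)) \<cdot>\<^sub>m (K - Ljdual dS dE HS HE V \<tau> \<beta> \<zeta> j K)"
proof -
  have "mtrace (rhoE HE \<beta> \<zeta> j) = 1"
    unfolding rhoE_def by (rule gibbs_trace[OF HE[OF j] dE_pos[OF j]])
  note exchange = ptrace2_energy_exchange[OF unitary_U[OF j] _ _ rhoE_carrier[OF j] this]
  have Kc: "K \<in> carrier_mat dS dS" and HEc: "HE j \<in> carrier_mat (dE j) (dE j)"
    and comm: "U j * (kron K (1\<^sub>m (dE j)) + kron (1\<^sub>m dS) (HE j)) = (kron K (1\<^sub>m (dE j)) + kron (1\<^sub>m dS) (HE j)) * U j"
    using K j HE[OF j] unfolding conserved_def self_adjoint_def by auto
  show ?thesis unfolding Phi_def Ljdual_def Let_def exchange[OF Kc HEc comm] ..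
qed

lemma trace_Phi_conserved:
  assumes K: "conserved K" and j: "j < M" and R: "R \<in> carrier_mat dS dS"
  shows "mtrace (R * Phi M dS dE HS HE V \<tau> \<beta> \<zeta> j)
       = - 1 / complex_of_real (\<Sum>k<M. \<tau> k) * (mtrace (R * K) - mtrace (Lj dS dE HS HE V \<tau> \<beta> \<zeta> j R * K))"
proof -
  have Kc: "K \<in> carrier_mat dS dS" using K unfolding conserved_def by simp
  note LKc = Ljdual_carrier[of \<beta> \<zeta> j K]
  have "R * Phi M dS dE HS HE V \<tau> \<beta> \<zeta> j
      = (- 1 / complex_of_real (\<Sum>k<M. \<tau> k)) \<cdot>\<^sub>m (R * K - R * Ljdual dS dE HS HE V \<tau> \<beta> \<zeta> j K)"
    unfolding Phi_conserved[OF K j] mult_smult_distrib[OF R minus_carrier_mat[OF LKc]]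
      mult_minus_distrib_mat[OF R Kc LKc] ..
  moreover have "R * K - R * Ljdual dS dE HS HE V \<tau> \<beta> \<zeta> j K \<in> carrier_mat dS dS"
    by (rule minus_carrier_mat[OF mult_carrier_sq[OF R LKc]])
  ultimately have "mtrace (R * Phi M dS dE HS HE V \<tau> \<beta> \<zeta> j)
      = - 1 / complex_of_real (\<Sum>k<M. \<tau> k) * (mtrace (R * K) - mtrace (R * Ljdual dS dE HS HE V \<tau> \<beta> \<zeta> j K))"
    using R Kc LKc by (simp only: mtrace_smult mtrace_minus[OF mult_carrier_sq[OF R Kc] mult_carrier_sq[OF R LKc]])
  then show ?thesis unfolding trace_Ljdual[OF j R Kc] .
qed

lemma flux_sum_cyclic:
  assumes K: "conserved K" and \<rho>: "\<rho> \<in> carrier_mat dS dS"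
    and inv: "Lsharp Cy M dS dE HS HE V \<tau> \<beta> \<zeta> \<rho> = \<rho>"
  shows "(\<Sum>j<M. mtrace (\<rho> * Phisharp Cy M dS dE HS HE V \<tau> \<beta> \<zeta> j)) = 0"
proof -
  define G where "G k = fold (Lj dS dE HS HE V \<tau> \<beta> \<zeta>) [0..<k] \<rho>" for k
  have Gc: "G k \<in> carrier_mat dS dS" for k
    unfolding G_def using \<rho> by (cases k) (simp_all add: Lj_carrier)
  have Phi: "Phi M dS dE HS HE V \<tau> \<beta> \<zeta> j \<in> carrier_mat dS dS" for j
    unfolding Phi_def Let_def by simp
  have "mtrace (\<rho> * Phisharp Cy M dS dE HS HE V \<tau> \<beta> \<zeta> j)
      = - 1 / complex_of_real (\<Sum>k<M. \<tau> k) * (mtrace (G j * K) - mtrace (G (Suc j) * K))" if j: "j < M" for j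
  proof -
    have "mtrace (\<rho> * Phisharp Cy M dS dE HS HE V \<tau> \<beta> \<zeta> j) = mtrace (G j * Phi M dS dE HS HE V \<tau> \<beta> \<zeta> j)"
      unfolding Phisharp_def G_def using trace_foldr_Ljdual[OF less_imp_le[OF j] \<rho> Phi] by simp
    also have "\<dots> = - 1 / complex_of_real (\<Sum>k<M. \<tau> k) * (mtrace (G j * K) - mtrace (G (Suc j) * K))"
      unfolding trace_Phi_conserved[OF K j Gc] by (simp add: G_def)
    finally show ?thesis .
  qed
  then have "(\<Sum>j<M. mtrace (\<rho> * Phisharp Cy M dS dE HS HE V \<tau> \<beta> \<zeta> j))
      = - 1 / complex_of_real (\<Sum>k<M. \<tau> k) * (\<Sum>j<M. mtrace (G j * K) - mtrace (G (Suc j) * K))"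
    by (simp add: sum_distrib_left)
  also have "(\<Sum>j<M. mtrace (G j * K) - mtrace (G (Suc j) * K)) = mtrace (G 0 * K) - mtrace (G M * K)"
    by (rule sum_lessThan_telescope')
  also have "G M = G 0" using inv unfolding Lsharp_def G_def by simp
  finally show ?thesis by simp
qed

lemma flux_sum_random:
  assumes M: "M > 0" and K: "conserved K" and \<rho>: "\<rho> \<in> carrier_mat dS dS"
    and inv: "Lsharp Ra M dS dE HS HE V \<tau> \<beta> \<zeta> \<rho> = \<rho>"
  shows "(\<Sum>j<M. mtrace (\<rho> * Phisharp Ra M dS dE HS HE V \<tau> \<beta> \<zeta> j)) = 0"
proof -
  have Kc: "K \<in> carrier_mat dS dS" using K unfolding conserved_def by simp
  define S where "S = foldr (\<lambda>j A. Lj dS dE HS HE V \<tau> \<beta> \<zeta> j \<rho> + A) [0..<M] (0\<^sub>m dS dS)"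
  have Sc: "S \<in> carrier_mat dS dS" unfolding S_def by (rule foldr_add_carrier) (rule Lj_carrier)
  have "mtrace (S * K) = (\<Sum>j\<leftarrow>[0..<M]. mtrace (Lj dS dE HS HE V \<tau> \<beta> \<zeta> j \<rho> * K))"
    unfolding S_def foldr_add_mult[OF Lj_carrier Kc] by (rule mtrace_foldr_add) (simp add: Kc Lj_carrier)
  also have "\<dots> = (\<Sum>j<M. mtrace (Lj dS dE HS HE V \<tau> \<beta> \<zeta> j \<rho> * K))"
    by (simp add: sum_set_upt_conv_sum_list_nat[symmetric] atLeast0LessThan)
  finally have sum_L: "(\<Sum>j<M. mtrace (Lj dS dE HS HE V \<tau> \<beta> \<zeta> j \<rho> * K)) = mtrace (S * K)" ..
  have "\<rho> = (1 / of_nat M) \<cdot>\<^sub>m S" using inv unfolding Lsharp_def S_def by simp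
  then have "mtrace (S * K) = of_nat M * mtrace (\<rho> * K)"
    using M Sc Kc by (simp add: mult_smult_assoc_mat[of _ dS dS _ dS] mtrace_smult[of _ dS])
  then have sum_L': "(\<Sum>j<M. mtrace (Lj dS dE HS HE V \<tau> \<beta> \<zeta> j \<rho> * K)) = of_nat M * mtrace (\<rho> * K)"
    using sum_L by simp
  have "(\<Sum>j<M. mtrace (\<rho> * Phisharp Ra M dS dE HS HE V \<tau> \<beta> \<zeta> j))
      = (\<Sum>j<M. - 1 / complex_of_real (\<Sum>k<M. \<tau> k) * (mtrace (\<rho> * K) - mtrace (Lj dS dE HS HE V \<tau> \<beta> \<zeta> j \<rho> * K)))"
    by (intro sum.cong refl) (simp add: Phisharp_def trace_Phi_conserved[OF K _ \<rho>])
  also have "\<dots> = - 1 / complex_of_real (\<Sum>k<M. \<tau> k)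
      * (of_nat M * mtrace (\<rho> * K) - (\<Sum>j<M. mtrace (Lj dS dE HS HE V \<tau> \<beta> \<zeta> j \<rho> * K)))"
    unfolding sum_distrib_left[symmetric] sum_subtractf by simp
  finally show ?thesis unfolding sum_L' by simp
qed

lemma conserved_operator_exists:
  assumes \<beta>: "\<beta> > 0" and prim: "primitive dS (Lsharp s M dS dE HS HE V \<tau> \<beta> \<zeta>)"
    and B: "is_state dS B"
    and inv: "\<And>j. j < M \<Longrightarrow> U j * kron B (gibbs \<beta> (HE j)) * madj (U j) = kron B (gibbs \<beta> (HE j))"
  obtains K where "conserved K"
proof -
  have "self_adjoint dS B" using B unfolding is_state_def by simp
  then obtain Vb b where Vb: "unitary dS Vb" and Bd: "B = Vb * diag_matrix dS (\<lambda>i. complex_of_real (b i)) * madj Vb"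
    using self_adjoint_spectral by blast
  have "U j * kron B (gibbs \<beta> (HE j)) = kron B (gibbs \<beta> (HE j)) * U j" if j: "j < M" for j
    using B gibbs_carrier[OF HE[OF j]] unfolding is_state_def self_adjoint_def
    by (intro commute_of_unitary_conj[OF unitary_U[OF j] _ inv[OF j]]) simp
  note comm = this[unfolded Bd] and Uc = unitaryD(1)[OF unitary_U]
  define P where "P = Vb * diag_matrix dS (\<lambda>i. if b i = 0 then 1 else 0) * madj Vb"
  have Pc: "P \<in> carrier_mat dS dS" unfolding P_def using unitaryD(1)[OF Vb] by simp
  have comm_P: "U j * kron P (1\<^sub>m (dE j)) = kron P (1\<^sub>m (dE j)) * U j" if j: "j < M" for j
    unfolding P_def by (rule gibbs_commute_kernel[OF Uc[OF j] HE[OF j] dE_pos[OF j] Vb comm[OF j]])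
  have pres: "Lsharp s M dS dE HS HE V \<tau> \<beta> \<zeta> Y * P = 0\<^sub>m dS dS"
    if "Y \<in> carrier_mat dS dS" "Y * P = 0\<^sub>m dS dS" for Y
    by (rule Lsharp_left_ideal[OF Pc comm_P that])
  have b: "b i > 0" if "i < dS" for i
  proof -
    have "b i \<noteq> 0" by (rule primitive_state_faithful[OF prim B Vb Bd P_def pres that])
    then show ?thesis using state_eigenvalues_nonneg[OF B Vb Bd that] by simp
  qed
  define K where "K = Vb * diag_matrix dS (\<lambda>i. complex_of_real (- ln (b i) / \<beta>)) * madj Vb"
  have "conserved K"
    unfolding conserved_def
  proof (intro conjI allI impI)
    show "K \<in> carrier_mat dS dS" unfolding K_def using unitaryD(1)[OF Vb] by simp
    fix j assume j: "j < M"
    show "U j * (kron K (1\<^sub>m (dE j)) + kron (1\<^sub>m dS) (HE j)) = (kron K (1\<^sub>m (dE j)) + kron (1\<^sub>m dS) (HE j)) * U j"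
      unfolding K_def using \<beta> b by (intro gibbs_commute_log[OF Uc[OF j] HE[OF j] dE_pos[OF j] Vb comm[OF j]]) auto
  qed
  then show ?thesis by (rule that)
qed

end

theorem mainTheorem14:
  fixes s :: scheme and M dS :: nat and dE :: "nat \<Rightarrow> nat"
    and HS :: "complex mat" and HE V :: "nat \<Rightarrow> complex mat"
    and \<tau> :: "nat \<Rightarrow> real" and \<beta> :: real and \<zeta> :: "nat \<Rightarrow> real"
    and \<rho>plus :: "complex mat"
  assumes M: "M > 0" and dS: "dS > 0" and dE: "\<And>j. j < M \<Longrightarrow> dE j > 0"
    and HS: "self_adjoint dS HS"
    and HE: "\<And>j. j < M \<Longrightarrow> self_adjoint (dE j) (HE j)"
    and V: "\<And>j. j < M \<Longrightarrow> self_adjoint (dS * dE j) (V j)"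
    and tau: "\<And>j. j < M \<Longrightarrow> \<tau> j > 0"
    and beta: "\<beta> > 0"
    and ER: "\<exists>\<zeta>'. primitive dS (Lsharp s M dS dE HS HE V \<tau> \<beta> \<zeta>')"
    and NE: "\<exists>\<rho>0 :: real \<Rightarrow> complex mat. \<forall>z::real. is_state dS (\<rho>0 z) \<and>
              (\<forall>j<M. let U = Uop dS dE HS HE V \<tau> j;
                         R = kron (\<rho>0 z) (gibbs (\<beta> - z) (HE j))
                     in U * R * madj U = R)"
    and inv: "is_state dS \<rho>plus" "Lsharp s M dS dE HS HE V \<tau> \<beta> \<zeta> \<rho>plus = \<rho>plus"
    and uniq: "\<And>\<sigma>. is_state dS \<sigma> \<Longrightarrow> Lsharp s M dS dE HS HE V \<tau> \<beta> \<zeta> \<sigma> = \<sigma> \<Longrightarrow> \<sigma> = \<rho>plus"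
  shows "(\<Sum>j<M. mtrace (\<rho>plus * Phisharp s M dS dE HS HE V \<tau> \<beta> \<zeta> j)) = 0"
proof -
  interpret repeated_interaction M dS dE HS HE V \<tau>
    using dE HS HE V by unfold_locales
  obtain \<rho>0 :: "real \<Rightarrow> complex mat" where \<rho>0: "\<forall>z. is_state dS (\<rho>0 z) \<and>
      (\<forall>j<M. let U = Uop dS dE HS HE V \<tau> j; R = kron (\<rho>0 z) (gibbs (\<beta> - z) (HE j)) in U * R * madj U = R)"
    using NE by blast
  have B: "is_state dS (\<rho>0 0)" using \<rho>0 by blast
  have B_inv: "U j * kron (\<rho>0 0) (gibbs \<beta> (HE j)) * madj (U j) = kron (\<rho>0 0) (gibbs \<beta> (HE j))"
    if "j < M" for j
    using spec[OF \<rho>0, of 0] that by (simp add: Let_def)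
  obtain \<zeta>' where prim: "primitive dS (Lsharp s M dS dE HS HE V \<tau> \<beta> \<zeta>')" using ER by blast
  obtain K where K: "conserved K" by (rule conserved_operator_exists[OF beta prim B B_inv])
  have \<rho>: "\<rho>plus \<in> carrier_mat dS dS" using inv(1) unfolding is_state_def self_adjoint_def by simp
  show ?thesis
  proof (cases s)
    case Cy
    then show ?thesis using flux_sum_cyclic[OF K \<rho>] inv(2) by simp
  next
    case Ra
    then show ?thesis using flux_sum_random[OF M K \<rho>] inv(2) by simp
  qed
qed

end
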